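(* Let $\rho$ be a monotone risk measure on $\mathcal M$. For $\alpha\in(0,1]$, $\boldsymbol\theta=(\theta_1,\dots,\theta_n)\in(0,\infty)^n$ and $\Lambda\in\mathcal Q_n$, we have $\overline\rho(\mathbf P_{\alpha,\boldsymbol\theta})\le\overline\rho(\Lambda\mathbf P_{\alpha,\boldsymbol\theta})\le\overline\rho(\mathbf P_{\alpha,\Lambda\boldsymbol\theta})$.
   Context: Work on an atomless probability space. $\mathcal M$ is the set of cdfs on $\mathbb{R}$. A risk measure $\rho:\mathcal M\to\mathbb{R}$ is monotone if $\rho(F)\le\rho(G)$ whenever $F\ge G$ pointwise. $\overline\rho(\mathbf F)=\sup\{\rho(H):H\text{ is the cdf of }X_1+\dots+X_n,\ X_i\sim F_i\}$. $P_{\alpha,\theta}(x)=1-(\theta/x)^\alpha$ for $x\ge\theta$ (zero otherwise); $\mathbf P_{\alpha,\boldsymbol\theta}=(P_{\alpha,\theta_1},\dots,P_{\alpha,\theta_n})$. $\mathcal Q_n$ is the set of $n\times n$ doubly stochastic matrices; for $\Lambda=(\Lambda_{ij})\in\mathcal Q_n$, $\Lambda\mathbf F$ is the tuple with $i$-th component $\sum_j\Lambda_{ij}F_j$, and $\Lambda\boldsymbol\theta$ is the usual matrix-vector product. *)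

theory Defs
  imports "HOL-Probability.Probability"
begin

definition is_cdf :: "(real \<Rightarrow> real) \<Rightarrow> bool" where
  "is_cdf F \<longleftrightarrow> mono F \<and> (\<forall>x. continuous (at_right x) F)
     \<and> (F \<longlongrightarrow> 0) at_bot \<and> (F \<longlongrightarrow> 1) at_top"

definition cdf_set :: "(real \<Rightarrow> real) set" where
  "cdf_set = {F. is_cdf F}"

definition monotone_risk :: "((real \<Rightarrow> real) \<Rightarrow> real) \<Rightarrow> bool" where
  "monotone_risk \<rho> \<longleftrightarrow>
     (\<forall>F\<in>cdf_set. \<forall>G\<in>cdf_set. (\<forall>x. G x \<le> F x) \<longrightarrow> \<rho> F \<le> \<rho> G)"

definition atomless :: "'a measure \<Rightarrow> bool" where
  "atomless M \<longleftrightarrow> (\<forall>A\<in>sets M. 0 < measure M A \<longrightarrow>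
     (\<exists>B\<in>sets M. B \<subseteq> A \<and> 0 < measure M B \<and> measure M B < measure M A))"

definition rv_cdf :: "'a measure \<Rightarrow> ('a \<Rightarrow> real) \<Rightarrow> real \<Rightarrow> real" where
  "rv_cdf M X = (\<lambda>x. measure M {\<omega>\<in>space M. X \<omega> \<le> x})"

definition agg_set :: "'a measure \<Rightarrow> nat \<Rightarrow> (nat \<Rightarrow> real \<Rightarrow> real) \<Rightarrow> (real \<Rightarrow> real) set" where
  "agg_set M n F = {rv_cdf M (\<lambda>\<omega>. \<Sum>i<n. X i \<omega>) | X.
      (\<forall>i<n. X i \<in> borel_measurable M \<and> rv_cdf M (X i) = F i)}"

definition worst_rho :: "'a measure \<Rightarrow> ((real \<Rightarrow> real) \<Rightarrow> real) \<Rightarrow> nat \<Rightarrow> (nat \<Rightarrow> real \<Rightarrow> real) \<Rightarrow> ereal" where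
  "worst_rho M \<rho> n F = (SUP H\<in>agg_set M n F. ereal (\<rho> H))"

definition pareto_cdf :: "real \<Rightarrow> real \<Rightarrow> real \<Rightarrow> real" where
  "pareto_cdf \<alpha> \<theta> x = (if x \<ge> \<theta> then 1 - (\<theta> / x) powr \<alpha> else 0)"

definition pareto_tuple :: "real \<Rightarrow> (nat \<Rightarrow> real) \<Rightarrow> nat \<Rightarrow> real \<Rightarrow> real" where
  "pareto_tuple \<alpha> \<theta> = (\<lambda>i. pareto_cdf \<alpha> (\<theta> i))"

definition doubly_stochastic :: "nat \<Rightarrow> (nat \<Rightarrow> nat \<Rightarrow> real) \<Rightarrow> bool" where
  "doubly_stochastic n \<Lambda> \<longleftrightarrow> (\<forall>i<n. \<forall>j<n. 0 \<le> \<Lambda> i j)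
     \<and> (\<forall>i<n. (\<Sum>j<n. \<Lambda> i j) = 1) \<and> (\<forall>j<n. (\<Sum>i<n. \<Lambda> i j) = 1)"

definition mat_cdfs :: "nat \<Rightarrow> (nat \<Rightarrow> nat \<Rightarrow> real) \<Rightarrow> (nat \<Rightarrow> real \<Rightarrow> real) \<Rightarrow> nat \<Rightarrow> real \<Rightarrow> real" where
  "mat_cdfs n \<Lambda> F = (\<lambda>i x. \<Sum>j<n. \<Lambda> i j * F j x)"

definition mat_vec :: "nat \<Rightarrow> (nat \<Rightarrow> nat \<Rightarrow> real) \<Rightarrow> (nat \<Rightarrow> real) \<Rightarrow> nat \<Rightarrow> real" where
  "mat_vec n \<Lambda> v = (\<lambda>i. \<Sum>j<n. \<Lambda> i j * v j)"

end

theory Submission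
  imports Defs
begin

text \<open>
  Second inequality: for \<open>\<alpha> \<le> 1\<close> the tail \<open>\<Sum>j. \<Lambda> i j * (\<theta> j / x) powr \<alpha>\<close> of the \<open>i\<close>-th
  mixture is at most \<open>((\<Lambda> \<theta>) i / x) powr \<alpha>\<close> by concavity of \<open>s \<mapsto> s powr \<alpha>\<close>, so the mixture is
  stochastically dominated by the Pareto law with scale \<open>(\<Lambda> \<theta>) i\<close>. Pushing each \<open>Y i\<close> through its
  own cdf and then through that Pareto quantile gives \<open>W i \<ge> Y i\<close> with the Pareto marginals, and
  monotonicity of \<open>\<rho>\<close> concludes.

  First inequality: write \<open>\<Lambda>\<close> as a convex combination \<open>\<Sum>k. w k * P k\<close> of permutation matrices
  (Birkhoff). Given \<open>X\<close> with marginals \<open>F\<close>, encode it as a Borel function of one real variable \<open>Z\<close>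
  without atoms, so that \<open>V = F\<^sub>Z Z\<close> is uniform. Cutting \<open>[0, 1]\<close> into slabs of lengths \<open>w k\<close> and
  returning on slab \<open>k\<close> the permuted copy \<open>P k X'\<close> of a fresh copy \<open>X'\<close> of \<open>X\<close>, read off from the
  position of \<open>V\<close> in the slab, yields \<open>Y\<close> with marginals \<open>\<Lambda> F\<close> and with \<open>\<Sum>i. Y i\<close> distributed as
  \<open>\<Sum>i. X i\<close>. The randomisation comes from the continuous Pareto marginals themselves.
\<close>

section \<open>Hall's theorem and Birkhoff's decomposition\<close>

definition Hall_condition :: "'i set \<Rightarrow> ('i \<Rightarrow> 'b set) \<Rightarrow> bool" where
  "Hall_condition I A \<longleftrightarrow> (\<forall>J\<subseteq>I. card J \<le> card (\<Union>(A ` J)))"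

lemma Hall_condition_remove_element:
  assumes fin: "finite I" "\<forall>i\<in>I. finite (A i)"
    and surplus: "\<forall>J. J \<subseteq> I \<and> J \<noteq> {} \<and> J \<noteq> I \<longrightarrow> card J < card (\<Union>(A ` J))"
    and "i0 \<in> I"
  shows "Hall_condition (I - {i0}) (\<lambda>i. A i - {x})"
  unfolding Hall_condition_def
proof (intro allI impI)
  fix J assume J: "J \<subseteq> I - {i0}"
  show "card J \<le> card (\<Union>i\<in>J. A i - {x})"
  proof (cases "J = {}")
    case False
    then have "card J < card (\<Union>(A ` J))" using surplus J \<open>i0 \<in> I\<close> by blast
    moreover have "finite (\<Union>(A ` J))" using J fin by (meson Diff_subset finite_UN_I finite_subset subsetD)
    moreover have "(\<Union>i\<in>J. A i - {x}) = \<Union>(A ` J) - {x}" by auto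
    ultimately show ?thesis using diff_card_le_card_Diff[of "{x}" "\<Union>(A ` J)"] by simp
  qed simp
qed

lemma Hall_condition_remove_critical:
  assumes fin: "finite I" "\<forall>i\<in>I. finite (A i)" and hall: "Hall_condition I A"
    and J: "J \<subseteq> I" "card J = card (\<Union>(A ` J))"
  shows "Hall_condition (I - J) (\<lambda>i. A i - \<Union>(A ` J))"
  unfolding Hall_condition_def
proof (intro allI impI)
  fix K assume K: "K \<subseteq> I - J"
  have KJ: "K \<union> J \<subseteq> I" using K J(1) by auto
  have finKJ: "finite (K \<union> J)" using KJ fin(1) by (rule finite_subset)
  then have finite: "finite K" "finite J" by auto
  have finU: "finite (\<Union>(A ` (K \<union> J)))" using finKJ KJ fin(2) by (intro finite_UN_I) auto
  have "(\<Union>i\<in>K. A i - \<Union>(A ` J)) = \<Union>(A ` (K \<union> J)) - \<Union>(A ` J)" by auto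
  then have "card (\<Union>i\<in>K. A i - \<Union>(A ` J)) = card (\<Union>(A ` (K \<union> J))) - card (\<Union>(A ` J))"
    by (simp add: card_Diff_subset[OF finite_subset[OF _ finU]])
  moreover have "card (K \<union> J) \<le> card (\<Union>(A ` (K \<union> J)))"
    using hall K J(1) unfolding Hall_condition_def by (metis Diff_subset le_sup_iff subset_trans)
  moreover have "card (K \<union> J) = card K + card J"
    using finite K by (subst card_Un_disjoint) auto
  ultimately show "card K \<le> card (\<Union>i\<in>K. A i - \<Union>(A ` J))" using J(2) by linarith
qed

definition distinct_representatives :: "'i set \<Rightarrow> ('i \<Rightarrow> 'b set) \<Rightarrow> ('i \<Rightarrow> 'b) \<Rightarrow> bool" where
  "distinct_representatives I A f \<longleftrightarrow> inj_on f I \<and> (\<forall>i\<in>I. f i \<in> A i)"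

lemma distinct_representatives_insert:
  assumes f: "distinct_representatives (I - {i0}) (\<lambda>i. A i - {x}) f" and "x \<in> A i0" "i0 \<in> I"
  shows "distinct_representatives I A (f(i0 := x))"
proof -
  have "inj_on (f(i0 := x)) (I - {i0})" using f by (simp add: distinct_representatives_def inj_on_def)
  moreover have "x \<notin> (f(i0 := x)) ` (I - {i0})" using f by (auto simp: distinct_representatives_def)
  ultimately have "inj_on (f(i0 := x)) I"
    using inj_on_insert[of "f(i0 := x)" i0 "I - {i0}", unfolded insert_Diff[OF \<open>i0 \<in> I\<close>]] by simp
  then show ?thesis using f \<open>x \<in> A i0\<close> by (simp add: distinct_representatives_def)
qed

lemma distinct_representatives_union:
  assumes f1: "distinct_representatives J A f1"
    and f2: "distinct_representatives (I - J) (\<lambda>i. A i - \<Union>(A ` J)) f2" and "J \<subseteq> I"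
  shows "distinct_representatives I A (\<lambda>i. if i \<in> J then f1 i else f2 i)"
proof -
  define g where "g = (\<lambda>i. if i \<in> J then f1 i else f2 i)"
  have inside: "g i \<in> \<Union>(A ` J)" if "i \<in> J" for i
    using that f1 by (auto simp: g_def distinct_representatives_def)
  have outside: "g i \<notin> \<Union>(A ` J)" if "i \<in> I - J" for i
    using that f2 by (simp add: g_def distinct_representatives_def)
  have "inj_on g I"
  proof (rule inj_onI)
    fix a b assume ab: "a \<in> I" "b \<in> I" "g a = g b"
    show "a = b"
    proof (cases "a \<in> J"; cases "b \<in> J")
      assume "a \<in> J" "b \<in> J"
      then show ?thesis using ab(3) f1 by (simp add: g_def distinct_representatives_def inj_on_def)
    next
      assume "a \<notin> J" "b \<notin> J"
      then show ?thesis using ab f2 by (simp add: g_def distinct_representatives_def inj_on_def)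
    qed (use ab inside outside in \<open>metis DiffI\<close>)+
  qed
  moreover have "\<forall>i\<in>I. g i \<in> A i" using f1 f2 by (auto simp: g_def distinct_representatives_def)
  ultimately show ?thesis by (simp add: distinct_representatives_def g_def)
qed

text \<open>Halmos--Vaughan induction: either every proper subfamily has a surplus, and any element can
  be matched first, or some proper subfamily is critical and is matched separately from its
  complement.\<close>
theorem Hall_marriage:
  fixes A :: "'i \<Rightarrow> 'b set"
  assumes "finite I" "\<forall>i\<in>I. finite (A i)" "Hall_condition I A"
  shows "\<exists>f. distinct_representatives I A f"
  using assms
proof (induction "card I" arbitrary: I A rule: less_induct)
  case less
  note fin = less.prems(1,2) and hall = less.prems(3)
  show ?case
  proof (cases "\<forall>J. J \<subseteq> I \<and> J \<noteq> {} \<and> J \<noteq> I \<longrightarrow> card J < card (\<Union>(A ` J))")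
    case surplus: True
    show ?thesis
    proof (cases "I = {}")
      case False
      then obtain i0 where i0: "i0 \<in> I" by auto
      then have "card {i0} \<le> card (\<Union>(A ` {i0}))" using hall unfolding Hall_condition_def by blast
      then have "A i0 \<noteq> {}" by auto
      then obtain x where x: "x \<in> A i0" by blast
      have "card (I - {i0}) < card I" by (rule card_Diff1_less[OF fin(1) i0])
      then have "\<exists>f. distinct_representatives (I - {i0}) (\<lambda>i. A i - {x}) f"
        by (rule less.hyps) (use fin Hall_condition_remove_element[OF fin surplus i0] in auto)
      then obtain f where "distinct_representatives (I - {i0}) (\<lambda>i. A i - {x}) f" ..
      then have "distinct_representatives I A (f(i0 := x))"
        using x i0 by (rule distinct_representatives_insert)
      then show ?thesis by blast
    qed (rule exI[of _ undefined], simp add: distinct_representatives_def)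
  next
    case False
    then obtain J where J: "J \<subseteq> I" "J \<noteq> {}" "J \<noteq> I" "\<not> card J < card (\<Union>(A ` J))"
      by blast
    have "card J \<le> card (\<Union>(A ` J))" using hall J(1) unfolding Hall_condition_def by blast
    then have critical: "card J = card (\<Union>(A ` J))" using J(4) by linarith
    have finJ: "finite J" using J(1) fin(1) by (rule finite_subset)
    have "0 < card J" using finJ J(2) by auto
    then have "card (I - J) < card I"
      using card_Diff_subset[OF finJ J(1)] card_mono[OF fin(1) J(1)] by linarith
    have "card J < card I" using J(1,3) fin(1) by (simp add: psubsetI psubset_card_mono)
    then have "\<exists>f. distinct_representatives J A f"
      by (rule less.hyps) (use finJ fin J(1) hall in \<open>auto simp: Hall_condition_def\<close>)
    then obtain f1 where f1: "distinct_representatives J A f1" ..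
    from \<open>card (I - J) < card I\<close> have "\<exists>f. distinct_representatives (I - J) (\<lambda>i. A i - \<Union>(A ` J)) f"
      by (rule less.hyps) (use fin Hall_condition_remove_critical[OF fin hall J(1) critical] in auto)
    then obtain f2 where f2: "distinct_representatives (I - J) (\<lambda>i. A i - \<Union>(A ` J)) f2" ..
    have "distinct_representatives I A (\<lambda>i. if i \<in> J then f1 i else f2 i)"
      by (rule distinct_representatives_union[OF f1 f2 J(1)])
    then show ?thesis by blast
  qed
qed

lemma Hall_condition_positive_entries:
  fixes L :: "nat \<Rightarrow> nat \<Rightarrow> real"
  assumes nonneg: "\<forall>i<n. \<forall>j<n. 0 \<le> L i j" and rows: "\<forall>i<n. (\<Sum>j<n. L i j) = c"
    and cols: "\<forall>j<n. (\<Sum>i<n. L i j) = c" and "0 < c"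
  shows "Hall_condition {..<n} (\<lambda>i. {j. j < n \<and> 0 < L i j})"
  unfolding Hall_condition_def
proof (intro allI impI)
  fix J assume J: "J \<subseteq> {..<n}"
  define N where "N = (\<Union>i\<in>J. {j. j < n \<and> 0 < L i j})"
  have N: "N \<subseteq> {..<n}" by (auto simp: N_def)
  have outside_N: "L i j = 0" if "i \<in> J" "j \<in> {..<n} - N" for i j
    using that nonneg J by (force simp: N_def)
  have "real (card J) * c = (\<Sum>i\<in>J. c)" by simp
  also have "\<dots> = (\<Sum>i\<in>J. \<Sum>j<n. L i j)" by (rule sum.cong) (use rows J in auto)
  also have "\<dots> = (\<Sum>i\<in>J. \<Sum>j\<in>N. L i j)"
    using N outside_N by (intro sum.cong refl sum.mono_neutral_right) auto
  also have "\<dots> = (\<Sum>j\<in>N. \<Sum>i\<in>J. L i j)" by (rule sum.swap)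
  also have "\<dots> \<le> (\<Sum>j\<in>N. \<Sum>i<n. L i j)"
    using J N nonneg by (intro sum_mono sum_mono2) auto
  also have "\<dots> = (\<Sum>j\<in>N. c)" by (rule sum.cong) (use cols N in auto)
  also have "\<dots> = real (card N) * c" by simp
  finally have "real (card J) * c \<le> real (card N) * c" .
  then show "card J \<le> card (\<Union>i\<in>J. {j. j < n \<and> 0 < L i j})"
    using \<open>0 < c\<close> by (simp add: N_def)
qed

lemma permutation_in_positive_entries:
  fixes L :: "nat \<Rightarrow> nat \<Rightarrow> real"
  assumes "\<forall>i<n. \<forall>j<n. 0 \<le> L i j" "\<forall>i<n. (\<Sum>j<n. L i j) = c" "\<forall>j<n. (\<Sum>i<n. L i j) = c" "0 < c"
  obtains s where "bij_betw s {..<n} {..<n}" "\<forall>i<n. 0 < L i (s i)"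
proof -
  obtain s where s: "inj_on s {..<n}" "\<forall>i<n. s i < n \<and> 0 < L i (s i)"
    using Hall_marriage[OF _ _ Hall_condition_positive_entries[OF assms]]
    by (auto simp: distinct_representatives_def)
  then have "s ` {..<n} = {..<n}" by (simp add: card_image card_subset_eq image_subset_iff)
  then show ?thesis using that s by (simp add: bij_betw_def)
qed

lemma permutation_matrix_row_sum: "i < n \<Longrightarrow> (\<Sum>j<n. of_bool (i = j) :: real) = 1" for i n :: nat
  unfolding of_bool_def by (simp add: sum.delta)

lemma permutation_matrix_column_sum:
  fixes s :: "nat \<Rightarrow> nat"
  assumes "bij_betw s {..<n} {..<n}" "j < n"
  shows "(\<Sum>i<n. of_bool (s i = j) :: real) = 1"
proof -
  have "(\<Sum>i<n. of_bool (s i = j) :: real) = (\<Sum>k<n. of_bool (k = j))"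
    by (rule sum.reindex_bij_betw[OF assms(1), of "\<lambda>k. of_bool (k = j)"])
  also have "\<dots> = 1" using assms(2) unfolding of_bool_def by (simp add: sum.delta)
  finally show ?thesis .
qed

definition matrix_support :: "nat \<Rightarrow> (nat \<Rightarrow> nat \<Rightarrow> real) \<Rightarrow> (nat \<times> nat) set" where
  "matrix_support n L = {(i, j). i < n \<and> j < n \<and> L i j \<noteq> 0}"

lemma finite_matrix_support: "finite (matrix_support n L)"
  by (rule finite_subset[of _ "{..<n} \<times> {..<n}"]) (auto simp: matrix_support_def)

lemma line_sums_subtract_permutation_matrix:
  fixes L :: "nat \<Rightarrow> nat \<Rightarrow> real"
  assumes rows: "\<forall>i<n. (\<Sum>j<n. L i j) = c" and cols: "\<forall>j<n. (\<Sum>i<n. L i j) = c"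
    and s: "bij_betw s {..<n} {..<n}"
  shows "\<forall>i<n. (\<Sum>j<n. L i j - t * of_bool (s i = j)) = c - t"
    "\<forall>j<n. (\<Sum>i<n. L i j - t * of_bool (s i = j)) = c - t"
proof -
  show "\<forall>i<n. (\<Sum>j<n. L i j - t * of_bool (s i = j)) = c - t"
  proof (intro allI impI)
    fix i assume "i < n"
    have "(\<Sum>j<n. L i j - t * of_bool (s i = j)) = (\<Sum>j<n. L i j) - t * (\<Sum>j<n. of_bool (s i = j))"
      by (simp only: sum_subtractf sum_distrib_left)
    moreover have "s i < n" using bij_betwE[OF s] \<open>i < n\<close> by blast
    ultimately show "(\<Sum>j<n. L i j - t * of_bool (s i = j)) = c - t"
      using rows \<open>i < n\<close> permutation_matrix_row_sum by simp
  qed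
  show "\<forall>j<n. (\<Sum>i<n. L i j - t * of_bool (s i = j)) = c - t"
  proof (intro allI impI)
    fix j assume "j < n"
    have "(\<Sum>i<n. L i j - t * of_bool (s i = j)) = (\<Sum>i<n. L i j) - t * (\<Sum>i<n. of_bool (s i = j))"
      by (simp only: sum_subtractf sum_distrib_left)
    then show "(\<Sum>i<n. L i j - t * of_bool (s i = j)) = c - t"
      using cols \<open>j < n\<close> permutation_matrix_column_sum[OF s \<open>j < n\<close>] by simp
  qed
qed

text \<open>Subtracting the largest admissible multiple of a permutation matrix inside the support
  annihilates at least one entry.\<close>
lemma subtract_permutation_matrix:
  fixes L :: "nat \<Rightarrow> nat \<Rightarrow> real"
  assumes nonneg: "\<forall>i<n. \<forall>j<n. 0 \<le> L i j" and s: "bij_betw s {..<n} {..<n}"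
    and pos: "\<forall>i<n. 0 < L i (s i)" and "0 < n"
  obtains t where "0 < t" "\<forall>i<n. \<forall>j<n. 0 \<le> L i j - t * of_bool (s i = j)"
    "card (matrix_support n (\<lambda>i j. L i j - t * of_bool (s i = j))) < card (matrix_support n L)"
proof -
  define t where "t = Min ((\<lambda>i. L i (s i)) ` {..<n})"
  have "t \<in> (\<lambda>i. L i (s i)) ` {..<n}" unfolding t_def using \<open>0 < n\<close> by (intro Min_in) auto
  then obtain i0 where i0: "i0 < n" "t = L i0 (s i0)" by auto
  have t_le: "t \<le> L i (s i)" if "i < n" for i using that unfolding t_def by simp
  have s_lt: "s i < n" if "i < n" for i using s that by (meson bij_betwE lessThan_iff)
  define L' where "L' i j = L i j - t * of_bool (s i = j)" for i j
  have "matrix_support n L' \<subseteq> matrix_support n L - {(i0, s i0)}"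
  proof
    fix ij assume "ij \<in> matrix_support n L'"
    then obtain i j where ij: "ij = (i, j)" "i < n" "j < n" "L' i j \<noteq> 0"
      by (auto simp: matrix_support_def)
    have "L i j \<noteq> 0" using ij(4) pos ij(2) by (auto simp: L'_def)
    moreover have "(i, j) \<noteq> (i0, s i0)" using ij(4) i0 by (auto simp: L'_def)
    ultimately show "ij \<in> matrix_support n L - {(i0, s i0)}" using ij by (simp add: matrix_support_def)
  qed
  then have "card (matrix_support n L') \<le> card (matrix_support n L - {(i0, s i0)})"
    by (simp add: card_mono finite_matrix_support)
  also have "\<dots> < card (matrix_support n L)"
    using i0 pos s_lt by (intro card_Diff1_less finite_matrix_support) (auto simp: matrix_support_def)
  finally have "card (matrix_support n L') < card (matrix_support n L)" .
  moreover have "0 < t" using i0 pos by simp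
  moreover have "\<forall>i<n. \<forall>j<n. 0 \<le> L i j - t * of_bool (s i = j)" using nonneg t_le by auto
  ultimately show ?thesis using that unfolding L'_def by blast
qed

theorem Birkhoff_decomposition:
  fixes L :: "nat \<Rightarrow> nat \<Rightarrow> real"
  assumes "\<forall>i<n. \<forall>j<n. 0 \<le> L i j" "\<forall>i<n. (\<Sum>j<n. L i j) = c" "\<forall>j<n. (\<Sum>i<n. L i j) = c"
  shows "\<exists>(m::nat) w p. (\<forall>k<m. 0 \<le> w k \<and> bij_betw (p k) {..<n} {..<n}) \<and>
    (\<forall>i<n. \<forall>j<n. L i j = (\<Sum>k<m. w k * of_bool (p k i = j)))"
  using assms
proof (induction "card (matrix_support n L)" arbitrary: L c rule: less_induct)
  case less
  note nonneg = less.prems(1) and rows = less.prems(2) and cols = less.prems(3)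
  show ?case
  proof (cases "\<forall>i<n. \<forall>j<n. L i j = 0")
    case True
    then show ?thesis by (intro exI[of _ "0::nat"]) auto
  next
    case False
    then obtain i0 j0 where ij0: "i0 < n" "j0 < n" "L i0 j0 \<noteq> 0" by blast
    then have "0 < L i0 j0" using nonneg by force
    also have "L i0 j0 \<le> (\<Sum>j<n. L i0 j)" using nonneg ij0 by (intro member_le_sum) auto
    also have "\<dots> = c" using rows ij0 by simp
    finally have "0 < c" .
    then obtain s where s: "bij_betw s {..<n} {..<n}" "\<forall>i<n. 0 < L i (s i)"
      by (rule permutation_in_positive_entries[OF less.prems])
    have "0 < n" using ij0(1) by simp
    then obtain t where t: "0 < t" "\<forall>i<n. \<forall>j<n. 0 \<le> L i j - t * of_bool (s i = j)"
      "card (matrix_support n (\<lambda>i j. L i j - t * of_bool (s i = j))) < card (matrix_support n L)"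
      by (rule subtract_permutation_matrix[OF nonneg s])
    obtain m :: nat and w p where wp: "\<forall>k<m. 0 \<le> w k \<and> bij_betw (p k) {..<n} {..<n}"
      "\<forall>i<n. \<forall>j<n. L i j - t * of_bool (s i = j) = (\<Sum>k<m. w k * of_bool (p k i = j))"
      using less.hyps[OF t(3) t(2) line_sums_subtract_permutation_matrix[OF rows cols s(1)]] by blast
    have "L i j = (\<Sum>k<Suc m. (w(m := t)) k * of_bool ((p(m := s)) k i = j))"
      if "i < n" "j < n" for i j
    proof -
      have "L i j - t * of_bool (s i = j) = (\<Sum>k<m. w k * of_bool (p k i = j))"
        using wp(2) that by blast
      moreover have "(\<Sum>k<Suc m. (w(m := t)) k * of_bool ((p(m := s)) k i = j)) =
          (\<Sum>k<m. w k * of_bool (p k i = j)) + t * of_bool (s i = j)"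
        by (simp add: sum.lessThan_Suc)
      ultimately show ?thesis by linarith
    qed
    moreover have "\<forall>k<Suc m. 0 \<le> (w(m := t)) k \<and> bij_betw ((p(m := s)) k) {..<n} {..<n}"
      using wp(1) t(1) s(1) by (auto simp: less_Suc_eq)
    ultimately show ?thesis by blast
  qed
qed

section \<open>Distribution functions and the quantile transform\<close>

lemma rv_cdf_eq_cdf_distr:
  assumes "X \<in> borel_measurable M"
  shows "rv_cdf M X = cdf (distr M borel X)"
proof
  fix x
  have "{\<omega>\<in>space M. X \<omega> \<le> x} = X -` {..x} \<inter> space M" by auto
  then show "rv_cdf M X x = cdf (distr M borel X) x"
    unfolding rv_cdf_def cdf_def using assms by (simp add: measure_distr)
qed

lemma rv_cdf_cong: "(\<And>\<omega>. \<omega> \<in> space M \<Longrightarrow> X \<omega> = Y \<omega>) \<Longrightarrow> rv_cdf M X = rv_cdf M Y"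
  unfolding rv_cdf_def by (intro ext arg_cong[where f="measure M"]) auto

lemma (in prob_space) is_cdf_rv_cdf:
  assumes "X \<in> borel_measurable M"
  shows "is_cdf (rv_cdf M X)"
proof -
  interpret D: real_distribution "distr M borel X" using assms by simp
  show ?thesis unfolding is_cdf_def rv_cdf_eq_cdf_distr[OF assms]
    using D.cdf_nondecreasing D.cdf_is_right_cont D.cdf_lim_at_bot D.cdf_lim_at_top_prob
    by (auto intro: monoI)
qed

lemma (in prob_space) rv_cdf_nonneg: "0 \<le> rv_cdf M X x"
  by (simp add: rv_cdf_def)

lemma (in prob_space) rv_cdf_le_1: "rv_cdf M X x \<le> 1"
  by (simp add: rv_cdf_def)

lemma (in prob_space) isCont_rv_cdf_iff:
  assumes "X \<in> borel_measurable M"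
  shows "isCont (rv_cdf M X) x \<longleftrightarrow> prob {\<omega>\<in>space M. X \<omega> = x} = 0"
proof -
  interpret D: real_distribution "distr M borel X" using assms by simp
  have "measure (distr M borel X) {x} = prob {\<omega>\<in>space M. X \<omega> = x}"
    using assms by (simp add: measure_distr vimage_def Int_def conj_commute)
  then show ?thesis unfolding rv_cdf_eq_cdf_distr[OF assms] by (simp add: D.isCont_cdf)
qed

lemma is_cdf_mono: "is_cdf F \<Longrightarrow> x \<le> y \<Longrightarrow> F x \<le> F y"
  unfolding is_cdf_def mono_def by blast

lemma continuous_cdf_sublevel_set:
  assumes F: "is_cdf F" and cont: "\<And>x. isCont F x" and "t < 1" and "F y0 \<le> t"
  obtains s where "F s = t" "\<And>y. F y \<le> t \<longleftrightarrow> y \<le> s"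
proof -
  define S where "S = {y. F y \<le> t}"
  have "(F \<longlongrightarrow> 1) at_top" using F unfolding is_cdf_def by blast
  then have "eventually (\<lambda>y. t < F y) at_top" using \<open>t < 1\<close> by (rule order_tendstoD)
  then obtain b where b: "\<And>y. b \<le> y \<Longrightarrow> t < F y" by (auto simp: eventually_at_top_linorder)
  have "y \<le> b" if "y \<in> S" for y using b[of y] that by (cases "b \<le> y") (auto simp: S_def)
  then have bdd: "bdd_above S" by (rule bdd_aboveI)
  have "S \<noteq> {}" using \<open>F y0 \<le> t\<close> by (auto simp: S_def)
  define s where "s = Sup S"
  have below: "y \<le> s" if "F y \<le> t" for y
    unfolding s_def using bdd that by (intro cSup_upper) (auto simp: S_def)
  have above: "F y \<le> t" if "y < s" for y
  proof -
    obtain z where "z \<in> S" "y < z" using \<open>y < s\<close> \<open>S \<noteq> {}\<close> unfolding s_def by (meson less_cSupE)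
    then show ?thesis using is_cdf_mono[OF F, of y z] by (simp add: S_def)
  qed
  have right: "t \<le> F y" if "s < y" for y using below[of y] that by force
  have left: "F s \<le> t"
  proof (rule tendsto_upperbound)
    show "(F \<longlongrightarrow> F s) (at_left s)" using cont by (simp add: isCont_def filterlim_at_split)
    show "\<forall>\<^sub>F y in at_left s. F y \<le> t"
      unfolding eventually_at_filter by (intro always_eventually) (auto intro: above)
  qed simp
  moreover have "t \<le> F s"
  proof (rule tendsto_lowerbound)
    show "(F \<longlongrightarrow> F s) (at_right s)" using cont by (simp add: isCont_def filterlim_at_split)
    show "\<forall>\<^sub>F y in at_right s. t \<le> F y"
      unfolding eventually_at_filter by (intro always_eventually) (auto intro: right)
  qed simp
  moreover have "F y \<le> t \<longleftrightarrow> y \<le> s" for y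
    using below is_cdf_mono[OF F, of y s] left by auto
  ultimately show ?thesis using that by (metis order_antisym)
qed

definition standard_uniform :: "'a measure \<Rightarrow> ('a \<Rightarrow> real) \<Rightarrow> bool" where
  "standard_uniform M V \<longleftrightarrow> V \<in> borel_measurable M \<and> (\<forall>\<omega>\<in>space M. 0 \<le> V \<omega> \<and> V \<omega> \<le> 1)
     \<and> (\<forall>t. 0 \<le> t \<and> t \<le> 1 \<longrightarrow> measure M {\<omega>\<in>space M. V \<omega> \<le> t} = t)"

context prob_space
begin

lemma prob_cdf_transform_le:
  assumes X: "X \<in> borel_measurable M" and cont: "\<And>x. isCont (rv_cdf M X) x"
    and "0 \<le> t" "t < 1"
  shows "prob {\<omega>\<in>space M. rv_cdf M X (X \<omega>) \<le> t} = t"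
proof (cases "\<exists>y. rv_cdf M X y \<le> t")
  case True
  then obtain s where s: "rv_cdf M X s = t" "\<And>y. rv_cdf M X y \<le> t \<longleftrightarrow> y \<le> s"
    using continuous_cdf_sublevel_set[OF is_cdf_rv_cdf[OF X] cont \<open>t < 1\<close>] by blast
  then show ?thesis by (simp add: rv_cdf_def)
next
  case False
  have "(rv_cdf M X \<longlongrightarrow> 0) at_bot" using is_cdf_rv_cdf[OF X] unfolding is_cdf_def by blast
  moreover have "\<forall>\<^sub>F y in at_bot. t \<le> rv_cdf M X y" using False by (simp add: not_le less_imp_le)
  ultimately have "t \<le> 0" by (rule tendsto_lowerbound) simp
  then show ?thesis using False \<open>0 \<le> t\<close> by simp
qed

lemma standard_uniform_cdf_transform:
  assumes X: "X \<in> borel_measurable M" and cont: "\<And>x. isCont (rv_cdf M X) x"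
  shows "standard_uniform M (\<lambda>\<omega>. rv_cdf M X (X \<omega>))"
proof -
  have "continuous_on UNIV (rv_cdf M X)" using cont by (simp add: continuous_at_imp_continuous_on)
  then have "rv_cdf M X \<in> borel_measurable borel" by (rule borel_measurable_continuous_onI)
  moreover have "prob {\<omega>\<in>space M. rv_cdf M X (X \<omega>) \<le> 1} = 1"
    using rv_cdf_le_1 by (simp add: prob_space)
  moreover have "prob {\<omega>\<in>space M. rv_cdf M X (X \<omega>) \<le> t} = t" if "0 \<le> t" "t \<le> 1" for t
    using prob_cdf_transform_le[OF X cont] that calculation(2) by (cases "t = 1") auto
  ultimately show ?thesis
    unfolding standard_uniform_def using X by (simp add: rv_cdf_nonneg rv_cdf_le_1)
qed

lemma standard_uniform_rv_cdf:
  assumes "standard_uniform M V"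
  shows "rv_cdf M V = (\<lambda>t. max 0 (min t 1))"
proof
  fix t :: real
  consider "t < 0" | "0 \<le> t" "t \<le> 1" | "1 < t" by fastforce
  then show "rv_cdf M V t = max 0 (min t 1)"
  proof cases
    case 1
    then have "{\<omega>\<in>space M. V \<omega> \<le> t} = {}" using assms by (force simp: standard_uniform_def)
    then have "rv_cdf M V t = 0" unfolding rv_cdf_def by (simp only: measure_empty)
    then show ?thesis using 1 by simp
  next
    case 3
    then have "{\<omega>\<in>space M. V \<omega> \<le> t} = space M" using assms by (force simp: standard_uniform_def)
    then have "rv_cdf M V t = 1" unfolding rv_cdf_def by (simp only: prob_space)
    then show ?thesis using 3 by simp
  qed (use assms in \<open>simp add: rv_cdf_def standard_uniform_def\<close>)
qed

lemma standard_uniform_prob_eq: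
  assumes "standard_uniform M V"
  shows "prob {\<omega>\<in>space M. V \<omega> = a} = 0"
proof -
  have V: "V \<in> borel_measurable M" using assms by (simp add: standard_uniform_def)
  have "isCont (rv_cdf M V) a" unfolding standard_uniform_rv_cdf[OF assms] by (intro continuous_intros)
  then show ?thesis using isCont_rv_cdf_iff[OF V] by simp
qed

lemma standard_uniform_prob_interval:
  assumes V: "standard_uniform M V" and "0 \<le> c" "c \<le> d" "d \<le> 1"
  shows "prob {\<omega>\<in>space M. c < V \<omega> \<and> V \<omega> \<le> d} = d - c"
proof -
  have [measurable]: "V \<in> borel_measurable M" using V by (simp add: standard_uniform_def)
  have "{\<omega>\<in>space M. c < V \<omega> \<and> V \<omega> \<le> d} = {\<omega>\<in>space M. V \<omega> \<le> d} - {\<omega>\<in>space M. V \<omega> \<le> c}"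
    by auto
  also have "prob \<dots> = prob {\<omega>\<in>space M. V \<omega> \<le> d} - prob {\<omega>\<in>space M. V \<omega> \<le> c}"
    using \<open>c \<le> d\<close> by (intro finite_measure_Diff) auto
  finally show ?thesis using V assms(2-4) by (simp add: standard_uniform_def)
qed

lemma standard_uniform_AE_pos:
  assumes "standard_uniform M V"
  shows "AE \<omega> in M. 0 < V \<omega>"
proof -
  have [measurable]: "V \<in> borel_measurable M" using assms by (simp add: standard_uniform_def)
  have "prob {\<omega>\<in>space M. V \<omega> \<le> 0} = 0" using assms by (simp add: standard_uniform_def)
  then show ?thesis by (subst (asm) prob_Collect_eq_0) (auto simp: not_le)
qed

end

lemma is_cdf_nonneg:
  assumes "is_cdf F" shows "0 \<le> F x"
proof (rule tendsto_upperbound)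
  show "(F \<longlongrightarrow> 0) at_bot" using assms by (simp add: is_cdf_def)
  show "\<forall>\<^sub>F y in at_bot. F y \<le> F x"
    using is_cdf_mono[OF assms] by (auto simp: eventually_at_bot_linorder)
qed simp

lemma is_cdf_le_1:
  assumes "is_cdf F" shows "F x \<le> 1"
proof (rule tendsto_lowerbound)
  show "(F \<longlongrightarrow> 1) at_top" using assms by (simp add: is_cdf_def)
  show "\<forall>\<^sub>F y in at_top. F x \<le> F y"
    using is_cdf_mono[OF assms] by (auto simp: eventually_at_top_linorder)
qed simp

text \<open>The value outside the open unit interval is irrelevant.\<close>
definition cdf_quantile :: "(real \<Rightarrow> real) \<Rightarrow> real \<Rightarrow> real" where
  "cdf_quantile F v = (if 0 < v \<and> v < 1 then Inf {x. v \<le> F x} else 0)"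

lemma cdf_quantile_le_iff:
  assumes F: "is_cdf F" and "0 < v" "v < 1"
  shows "cdf_quantile F v \<le> x \<longleftrightarrow> v \<le> F x"
proof -
  define S where "S = {x. v \<le> F x}"
  have "(F \<longlongrightarrow> 0) at_bot" using F by (simp add: is_cdf_def)
  then have "eventually (\<lambda>y. F y < v) at_bot" using \<open>0 < v\<close> by (rule order_tendstoD)
  then obtain a where a: "\<And>y. y \<le> a \<Longrightarrow> F y < v" by (auto simp: eventually_at_bot_linorder)
  have "a \<le> y" if "y \<in> S" for y using a[of y] that by (cases "y \<le> a") (auto simp: S_def)
  then have bdd: "bdd_below S" by (rule bdd_belowI)
  have "(F \<longlongrightarrow> 1) at_top" using F by (simp add: is_cdf_def)
  then have "eventually (\<lambda>y. v < F y) at_top" using \<open>v < 1\<close> by (rule order_tendstoD)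
  then obtain b where "\<And>y. b \<le> y \<Longrightarrow> v < F y" by (auto simp: eventually_at_top_linorder)
  then have "b \<in> S" by (simp add: S_def less_imp_le)
  then have "S \<noteq> {}" by blast
  have above: "v \<le> F y" if "Inf S < y" for y
  proof -
    obtain z where "z \<in> S" "z < y" using \<open>Inf S < y\<close> \<open>S \<noteq> {}\<close> by (meson cInf_lessD)
    then show ?thesis using is_cdf_mono[OF F, of z y] by (simp add: S_def)
  qed
  have "v \<le> F (Inf S)"
  proof (rule tendsto_lowerbound)
    show "(F \<longlongrightarrow> F (Inf S)) (at_right (Inf S))"
      using F by (simp add: is_cdf_def continuous_within)
    show "\<forall>\<^sub>F y in at_right (Inf S). v \<le> F y"
      unfolding eventually_at_filter by (intro always_eventually) (auto intro: above)
  qed simp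
  moreover have "cdf_quantile F v = Inf S" using assms by (simp add: cdf_quantile_def S_def)
  ultimately show ?thesis
    using is_cdf_mono[OF F, of "Inf S" x] cInf_lower[OF _ bdd, of x] by (auto simp: S_def)
qed

lemma borel_measurable_cdf_quantile [measurable]:
  assumes F: "is_cdf F"
  shows "cdf_quantile F \<in> borel_measurable borel"
proof (subst borel_measurable_iff_le, intro allI)
  fix x
  have "{v \<in> space borel. cdf_quantile F v \<le> x} =
      ({0<..<1} \<inter> {..F x}) \<union> (if 0 \<le> x then - {0<..<1} else {})"
    using cdf_quantile_le_iff[OF F] by (auto simp: cdf_quantile_def)
  then show "{v \<in> space borel. cdf_quantile F v \<le> x} \<in> sets borel" by simp
qed

context prob_space
begin

text \<open>Rescaled to the unit interval, a standard uniform variable conditioned on a slab is again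
  standard uniform, so its quantile transform has distribution function \<open>F\<close>.\<close>
lemma prob_slab_quantile_le:
  assumes V: "standard_uniform M V" and F: "is_cdf F" and "0 \<le> c" "0 < l" "c + l \<le> 1"
  shows "prob {\<omega>\<in>space M. c < V \<omega> \<and> V \<omega> \<le> c + l \<and> cdf_quantile F ((V \<omega> - c) / l) \<le> y}
    = l * F y"
proof -
  have [measurable]: "V \<in> borel_measurable M" using V by (simp add: standard_uniform_def)
  have Fy: "0 \<le> F y" "F y \<le> 1" using is_cdf_nonneg[OF F] is_cdf_le_1[OF F] by auto
  have "(c < V \<omega> \<and> V \<omega> \<le> c + l \<and> cdf_quantile F ((V \<omega> - c) / l) \<le> y) \<longleftrightarrow>
      (c < V \<omega> \<and> V \<omega> \<le> c + l * F y)" if "V \<omega> \<noteq> c + l" for \<omega>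
  proof (cases "c < V \<omega> \<and> V \<omega> < c + l")
    case True
    then have "0 < (V \<omega> - c) / l" "(V \<omega> - c) / l < 1" using \<open>0 < l\<close> by (auto simp: field_simps)
    then have "cdf_quantile F ((V \<omega> - c) / l) \<le> y \<longleftrightarrow> V \<omega> \<le> c + l * F y"
      using cdf_quantile_le_iff[OF F] \<open>0 < l\<close> by (auto simp: field_simps)
    then show ?thesis using True by auto
  next
    case False
    moreover have "l * F y \<le> l" using Fy \<open>0 < l\<close> by (simp add: mult_left_le)
    ultimately show ?thesis using that by auto
  qed
  moreover have "AE \<omega> in M. V \<omega> \<noteq> c + l"
    using standard_uniform_prob_eq[OF V] by (subst prob_Collect_eq_0[symmetric]) auto
  ultimately have "prob {\<omega>\<in>space M. c < V \<omega> \<and> V \<omega> \<le> c + l \<and> cdf_quantile F ((V \<omega> - c) / l) \<le> y}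
      = prob {\<omega>\<in>space M. c < V \<omega> \<and> V \<omega> \<le> c + l * F y}"
    using F by (intro prob_eq_AE) (auto elim: AE_mp)
  also have "\<dots> = l * F y"
    using Fy \<open>0 < l\<close> \<open>0 \<le> c\<close> \<open>c + l \<le> 1\<close>
    by (subst standard_uniform_prob_interval[OF V]) (auto intro: order_trans[OF _ \<open>c + l \<le> 1\<close>])
  finally show ?thesis .
qed

lemma measure_distr_restrict_space:
  assumes "A \<in> sets M" "g \<in> borel_measurable M" "B \<in> sets borel"
  shows "measure (distr (restrict_space M A) borel g) B = prob {\<omega>\<in>space M. \<omega> \<in> A \<and> g \<omega> \<in> B}"
proof -
  have g: "g \<in> measurable (restrict_space M A) borel" using assms(2) by (rule measurable_restrict_space1)
  have "measure (distr (restrict_space M A) borel g) B =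
      measure (restrict_space M A) (g -` B \<inter> space (restrict_space M A))"
    using g assms(3) by (rule measure_distr)
  also have "\<dots> = prob {\<omega>\<in>space M. \<omega> \<in> A \<and> g \<omega> \<in> B}"
    using sets.sets_into_space[OF assms(1)] assms
    by (subst measure_restrict_space) (auto simp: space_restrict_space intro!: arg_cong[where f=prob])
  finally show ?thesis .
qed

lemma finite_borel_measure_distr_restrict_space:
  assumes "A \<in> sets M" "g \<in> borel_measurable M"
  shows "finite_borel_measure (distr (restrict_space M A) borel g)"
proof -
  have "finite_measure (restrict_space M A)"
    using assms(1) by (intro finite_measure_restrict_space) (auto simp: finite_measure_axioms)
  then have "finite_measure (distr (restrict_space M A) borel g)"
    using measurable_restrict_space1[OF assms(2)] by (rule finite_measure.finite_measure_distr)
  then show ?thesis by (simp add: finite_borel_measure_def finite_borel_measure_axioms_def)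
qed

lemma finite_borel_measure_scale_distr:
  assumes "Z \<in> borel_measurable M"
  shows "finite_borel_measure (scale_measure (ennreal l) (distr M borel Z))"
proof -
  have "finite_measure (distr M borel Z)" using assms by (intro finite_measure_distr) auto
  then have "finite_measure (scale_measure (ennreal l) (distr M borel Z))"
    by (intro finite_measureI) (simp add: ennreal_mult_eq_top_iff finite_measure.emeasure_finite)
  then show ?thesis by (simp add: finite_borel_measure_def finite_borel_measure_axioms_def)
qed

text \<open>As functions of \<open>C\<close>, both sides are finite Borel measures; their cdfs agree by the
  previous lemma.\<close>
lemma prob_slab_quantile_in:
  assumes V: "standard_uniform M V" and Z[measurable]: "Z \<in> borel_measurable M"
    and "0 \<le> c" "0 \<le> l" "c + l \<le> 1" and C: "C \<in> sets borel"
  shows "prob {\<omega>\<in>space M. c < V \<omega> \<and> V \<omega> \<le> c + l \<and> cdf_quantile (rv_cdf M Z) ((V \<omega> - c) / l) \<in> C}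
    = l * prob {\<omega>\<in>space M. Z \<omega> \<in> C}"
proof (cases "l = 0")
  case False
  then have "0 < l" using \<open>0 \<le> l\<close> by simp
  have [measurable]: "V \<in> borel_measurable M" using V by (simp add: standard_uniform_def)
  define F where "F = rv_cdf M Z"
  have F: "is_cdf F" unfolding F_def using Z by (rule is_cdf_rv_cdf)
  define A where "A = {\<omega>\<in>space M. c < V \<omega> \<and> V \<omega> \<le> c + l}"
  define g where "g \<omega> = cdf_quantile F ((V \<omega> - c) / l)" for \<omega>
  have A: "A \<in> sets M" and g: "g \<in> borel_measurable M"
    using borel_measurable_cdf_quantile[OF F] unfolding A_def g_def by measurable
  define N1 where "N1 = distr (restrict_space M A) borel g"
  define N2 where "N2 = scale_measure (ennreal l) (distr M borel Z)"
  have N2: "measure N2 B = l * prob {\<omega>\<in>space M. Z \<omega> \<in> B}" if "B \<in> sets borel" for B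
    using \<open>0 < l\<close> that by (simp add: N2_def measure_distr vimage_def Int_def conj_commute)
  have "cdf N1 y = cdf N2 y" for y
  proof -
    have "cdf N1 y = prob {\<omega>\<in>space M. \<omega> \<in> A \<and> g \<omega> \<in> {..y}}"
      by (simp add: cdf_def N1_def measure_distr_restrict_space[OF A g])
    also have "\<dots> = l * F y"
      using prob_slab_quantile_le[OF V F \<open>0 \<le> c\<close> \<open>0 < l\<close> \<open>c + l \<le> 1\<close>, of y]
      by (simp add: A_def g_def conj_assoc)
    finally show ?thesis by (simp add: cdf_def N2 F_def rv_cdf_def)
  qed
  then have "N1 = N2"
    using cdf_unique'[OF finite_borel_measure_distr_restrict_space[OF A g]
        finite_borel_measure_scale_distr[OF Z]]
    unfolding N1_def N2_def by blast
  then show ?thesis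
    using measure_distr_restrict_space[OF A g C] N2[OF C] by (simp add: N1_def A_def g_def F_def)
next
  case True
  then have "{\<omega>\<in>space M. c < V \<omega> \<and> V \<omega> \<le> c + l \<and> cdf_quantile (rv_cdf M Z) ((V \<omega> - c) / l) \<in> C} = {}"
    by auto
  then show ?thesis using True by (metis measure_empty mult_zero_left)
qed

end

section \<open>Sampling a mixture by slicing a uniform variable\<close>

definition slab :: "(nat \<Rightarrow> real) \<Rightarrow> nat \<Rightarrow> real set" where
  "slab w k = {sum w {..<k}<..sum w {..<Suc k}}"

lemma disjoint_family_on_slab:
  assumes "\<And>k. k < m \<Longrightarrow> 0 \<le> w k"
  shows "disjoint_family_on (slab w) {..<m}"
proof -
  have disj: "slab w k \<inter> slab w k' = {}" if "k < k'" "k' < m" for k k'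
  proof -
    have "sum w {..<Suc k} \<le> sum w {..<k'}"
      using that assms by (intro sum_mono2) auto
    then show ?thesis by (auto simp: slab_def)
  qed
  show ?thesis unfolding disjoint_family_on_def
  proof (intro ballI impI)
    fix k k' assume "k \<in> {..<m}" "k' \<in> {..<m}" "k \<noteq> k'"
    then show "slab w k \<inter> slab w k' = {}"
      using disj[of k k'] disj[of k' k] by (cases "k < k'") auto
  qed
qed

lemma UN_slab:
  assumes "\<And>k. k < m \<Longrightarrow> 0 \<le> w k"
  shows "(\<Union>k<m. slab w k) = {0<..sum w {..<m}}"
  using assms
proof (induction m)
  case (Suc m)
  have "0 \<le> sum w {..<m}" using Suc.prems by (intro sum_nonneg) auto
  moreover have "0 \<le> w m" using Suc.prems by simp
  ultimately have "{0<..sum w {..<m}} \<union> slab w m = {0<..sum w {..<Suc m}}"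
    by (auto simp: slab_def)
  then show ?case using Suc by (simp add: lessThan_Suc Un_commute)
qed simp

text \<open>Inverse transform sampling from the mixture \<open>\<Sum>k<m. w k * law (\<psi> k Z)\<close>, where
  \<open>F\<close> is the cdf of \<open>Z\<close>: the slab containing the uniform variable \<open>v\<close> selects the component,
  and the position of \<open>v\<close> inside the slab, rescaled to the unit interval, samples \<open>Z\<close>.\<close>
definition mixture_transform ::
    "nat \<Rightarrow> (nat \<Rightarrow> real) \<Rightarrow> (nat \<Rightarrow> real \<Rightarrow> real) \<Rightarrow> (real \<Rightarrow> real) \<Rightarrow> real \<Rightarrow> real" where
  "mixture_transform m w \<psi> F v =
    (\<Sum>k<m. if v \<in> slab w k then \<psi> k (cdf_quantile F ((v - sum w {..<k}) / w k)) else 0)"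

lemma mixture_transform_on_slab:
  assumes "\<And>k. k < m \<Longrightarrow> 0 \<le> w k" and "k < m" "v \<in> slab w k"
  shows "mixture_transform m w \<psi> F v = \<psi> k (cdf_quantile F ((v - sum w {..<k}) / w k))"
proof -
  have "v \<notin> slab w k'" if "k' < m" "k' \<noteq> k" for k'
    using disjoint_family_onD[OF disjoint_family_on_slab, of m w k k'] assms that by auto
  then show ?thesis
    unfolding mixture_transform_def using assms(2,3)
    by (subst sum.remove[of _ k]) (auto intro!: sum.neutral)
qed

lemma sum_mixture_transform:
  "(\<Sum>i\<in>I. mixture_transform m w (\<psi> i) F v) = mixture_transform m w (\<lambda>k y. \<Sum>i\<in>I. \<psi> i k y) F v"
  unfolding mixture_transform_def by (subst sum.swap) (auto intro!: sum.cong)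

lemma slab_bounds:
  fixes w :: "nat \<Rightarrow> real"
  assumes "\<And>k. k < m \<Longrightarrow> 0 \<le> w k" "k < m"
  shows "0 \<le> sum w {..<k}" "sum w {..<k} + w k \<le> sum w {..<m}"
proof -
  show "0 \<le> sum w {..<k}" using assms by (intro sum_nonneg) auto
  have "sum w {..<Suc k} \<le> sum w {..<m}" using assms by (intro sum_mono2) auto
  then show "sum w {..<k} + w k \<le> sum w {..<m}" by simp
qed

lemma mixture_transform_le_iff:
  assumes w: "\<And>k. k < m \<Longrightarrow> 0 \<le> w k" and v: "v \<in> {0<..sum w {..<m}}"
  shows "mixture_transform m w \<psi> F v \<le> x \<longleftrightarrow>
    (\<exists>k<m. v \<in> slab w k \<and> \<psi> k (cdf_quantile F ((v - sum w {..<k}) / w k)) \<le> x)"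
proof -
  have "v \<in> (\<Union>k<m. slab w k)" using v by (simp only: UN_slab[OF w])
  then obtain k where k: "k < m" "v \<in> slab w k" by blast
  have other: "v \<notin> slab w k'" if "k' < m" "k' \<noteq> k" for k'
    using disjoint_family_onD[OF disjoint_family_on_slab, of m w k k'] w k that by auto
  have eq: "mixture_transform m w \<psi> F v = \<psi> k (cdf_quantile F ((v - sum w {..<k}) / w k))"
    by (rule mixture_transform_on_slab[OF w k])
  show ?thesis
  proof
    assume "mixture_transform m w \<psi> F v \<le> x"
    then show "\<exists>k<m. v \<in> slab w k \<and> \<psi> k (cdf_quantile F ((v - sum w {..<k}) / w k)) \<le> x"
      using k eq by auto
  next
    assume "\<exists>k'<m. v \<in> slab w k' \<and> \<psi> k' (cdf_quantile F ((v - sum w {..<k'}) / w k')) \<le> x"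
    then obtain k' where "k' < m" "v \<in> slab w k'" "\<psi> k' (cdf_quantile F ((v - sum w {..<k'}) / w k')) \<le> x"
      by blast
    moreover from this have "k' = k" using other by blast
    ultimately show "mixture_transform m w \<psi> F v \<le> x" using eq by simp
  qed
qed

context prob_space
begin

lemma prob_mixture_transform_le:
  assumes V: "standard_uniform M V" and Z[measurable]: "Z \<in> borel_measurable M"
    and w: "\<And>k. k < m \<Longrightarrow> 0 \<le> w k" "sum w {..<m} = 1"
    and \<psi>[measurable]: "\<And>k. \<psi> k \<in> borel_measurable borel"
  shows "prob {\<omega>\<in>space M. mixture_transform m w \<psi> (rv_cdf M Z) (V \<omega>) \<le> x}
    = (\<Sum>k<m. w k * prob {\<omega>\<in>space M. \<psi> k (Z \<omega>) \<le> x})"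
proof -
  have [measurable]: "V \<in> borel_measurable M" using V by (simp add: standard_uniform_def)
  define F where "F = rv_cdf M Z"
  have [measurable]: "cdf_quantile F \<in> borel_measurable borel"
    unfolding F_def using Z by (intro borel_measurable_cdf_quantile is_cdf_rv_cdf)
  define Q where "Q \<omega> = mixture_transform m w \<psi> F (V \<omega>)" for \<omega>
  define A where "A k = {\<omega>\<in>space M. V \<omega> \<in> slab w k \<and>
      \<psi> k (cdf_quantile F ((V \<omega> - sum w {..<k}) / w k)) \<le> x}" for k
  have [measurable]: "Q \<in> borel_measurable M" unfolding Q_def mixture_transform_def slab_def by measurable
  have A[measurable]: "A k \<in> sets M" for k unfolding A_def slab_def by measurable
  have "Q \<omega> \<le> x \<longleftrightarrow> \<omega> \<in> (\<Union>k<m. A k)" if "\<omega> \<in> space M" "0 < V \<omega>" for \<omega>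
    using V that mixture_transform_le_iff[OF w(1), where v = "V \<omega>"]
    by (auto simp: Q_def A_def w(2) standard_uniform_def)
  moreover have "AE \<omega> in M. 0 < V \<omega>" using V by (rule standard_uniform_AE_pos)
  ultimately have "prob {\<omega>\<in>space M. Q \<omega> \<le> x} = prob (\<Union>k<m. A k)"
    by (intro finite_measure_eq_AE) (auto elim!: AE_mp)
  also have "\<dots> = (\<Sum>k<m. prob (A k))"
  proof (rule finite_measure_finite_Union)
    have "A k \<inter> A k' = {}" if "k < m" "k' < m" "k \<noteq> k'" for k k'
      using disjoint_family_onD[OF disjoint_family_on_slab, of m w k k'] w(1) that
      by (auto simp: A_def)
    then show "disjoint_family_on A {..<m}" by (auto simp: disjoint_family_on_def)
  qed auto
  also have "\<dots> = (\<Sum>k<m. w k * prob {\<omega>\<in>space M. \<psi> k (Z \<omega>) \<le> x})"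
  proof (rule sum.cong[OF refl])
    fix k assume "k \<in> {..<m}"
    then have "0 \<le> sum w {..<k}" "sum w {..<k} + w k \<le> 1" using slab_bounds[of m w k] w by auto
    moreover have "A k = {\<omega>\<in>space M. sum w {..<k} < V \<omega> \<and> V \<omega> \<le> sum w {..<k} + w k \<and>
        cdf_quantile F ((V \<omega> - sum w {..<k}) / w k) \<in> \<psi> k -` {..x}}"
      by (auto simp: A_def slab_def)
    ultimately show "prob (A k) = w k * prob {\<omega>\<in>space M. \<psi> k (Z \<omega>) \<le> x}"
      using prob_slab_quantile_in[OF V Z \<open>0 \<le> sum w {..<k}\<close>, of "w k" "\<psi> k -` {..x}"]
        w(1)[of k] \<open>k \<in> {..<m}\<close>
      by (simp add: F_def measurable_sets_borel[OF \<psi> atMost_borel])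
  qed
  finally show ?thesis by (simp add: Q_def F_def)
qed

lemma rv_cdf_mixture_transform:
  assumes "standard_uniform M V" "Z \<in> borel_measurable M" "\<And>k. k < m \<Longrightarrow> 0 \<le> w k" "sum w {..<m} = 1"
    "\<And>k. \<psi> k \<in> borel_measurable borel"
  shows "rv_cdf M (\<lambda>\<omega>. mixture_transform m w \<psi> (rv_cdf M Z) (V \<omega>)) x
    = (\<Sum>k<m. w k * rv_cdf M (\<lambda>\<omega>. \<psi> k (Z \<omega>)) x)"
  using prob_mixture_transform_le[OF assms] by (simp add: rv_cdf_def)

end

section \<open>Encoding finitely many random variables in one\<close>

definition binary_digit :: "nat \<Rightarrow> real \<Rightarrow> int" where
  "binary_digit k x = \<lfloor>2 ^ Suc k * x\<rfloor> - 2 * \<lfloor>2 ^ k * x\<rfloor>"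

definition ternary_digit :: "nat \<Rightarrow> real \<Rightarrow> int" where
  "ternary_digit k x = \<lfloor>3 ^ Suc k * x\<rfloor> - 3 * \<lfloor>3 ^ k * x\<rfloor>"

lemma binary_digit_01: "binary_digit k x = 0 \<or> binary_digit k x = 1"
proof -
  define y where "y = 2 ^ k * x"
  have "2 * \<lfloor>y\<rfloor> \<le> \<lfloor>2 * y\<rfloor>" "\<lfloor>2 * y\<rfloor> < 2 * \<lfloor>y\<rfloor> + 2"
    by (simp_all add: le_floor_iff floor_less_iff) linarith+
  moreover have "binary_digit k x = \<lfloor>2 * y\<rfloor> - 2 * \<lfloor>y\<rfloor>"
    by (simp add: binary_digit_def y_def mult.assoc)
  ultimately show ?thesis by linarith
qed

lemma binary_digit_sums:
  assumes "0 \<le> x" "x < 1"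
  shows "(\<lambda>k. real_of_int (binary_digit k x) / 2 ^ Suc k) sums x"
proof -
  define f where "f k = real_of_int \<lfloor>2 ^ k * x\<rfloor> / 2 ^ k" for k :: nat
  have "real_of_int (binary_digit k x) / 2 ^ Suc k = f (Suc k) - f k" for k
    by (simp add: binary_digit_def f_def diff_divide_distrib)
  then have "(\<Sum>k<m. real_of_int (binary_digit k x) / 2 ^ Suc k) = f m - f 0" for m
    by (simp add: sum_lessThan_telescope)
  moreover have "f 0 = 0" using assms by (simp add: f_def floor_eq_iff)
  ultimately have partial: "(\<Sum>k<m. real_of_int (binary_digit k x) / 2 ^ Suc k) = f m" for m
    by simp
  have bound: "\<bar>f m - x\<bar> \<le> 1 / 2 ^ m" for m
  proof -
    have p: "(0::real) < 2 ^ m" by simp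
    have "real_of_int \<lfloor>2 ^ m * x\<rfloor> \<le> 2 ^ m * x" by (rule of_int_floor_le)
    then have below: "f m \<le> x" unfolding f_def using p by (simp add: divide_le_eq mult.commute)
    have "2 ^ m * x < real_of_int \<lfloor>2 ^ m * x\<rfloor> + 1" by (rule real_of_int_floor_add_one_gt)
    then have "x < (real_of_int \<lfloor>2 ^ m * x\<rfloor> + 1) / 2 ^ m" using p by (simp add: less_divide_eq mult.commute)
    also have "\<dots> = f m + 1 / 2 ^ m" unfolding f_def by (simp add: add_divide_distrib)
    finally show ?thesis using below by simp
  qed
  have "(\<lambda>m. 1 / (2::real) ^ m) \<longlonglongrightarrow> 0" by (intro LIMSEQ_divide_realpow_zero) auto
  then have "(\<lambda>m. f m - x) \<longlonglongrightarrow> 0"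
    by (rule Lim_null_comparison[rotated]) (simp add: bound)
  then show ?thesis unfolding sums_def partial by (simp add: LIM_zero_cancel)
qed

definition ternary_value :: "(nat \<Rightarrow> int) \<Rightarrow> real" where
  "ternary_value c = (\<Sum>k. real_of_int (c k) / 3 ^ Suc k)"

primrec ternary_prefix :: "(nat \<Rightarrow> int) \<Rightarrow> nat \<Rightarrow> int" where
  "ternary_prefix c 0 = 0"
| "ternary_prefix c (Suc m) = 3 * ternary_prefix c m + c m"

lemma summable_ternary:
  assumes "\<And>k. c k = 0 \<or> c k = 1"
  shows "summable (\<lambda>k. real_of_int (c k) / 3 ^ Suc k)"
proof (rule summable_comparison_test')
  show "summable (\<lambda>k. (1/3) * (1/3::real) ^ k)" by (intro summable_mult summable_geometric) simp
  show "norm (real_of_int (c k) / 3 ^ Suc k) \<le> 1/3 * (1/3) ^ k" for k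
    using assms[of k] by (auto simp: power_one_over)
qed

lemma ternary_value_bounds:
  assumes "\<And>k. c k = 0 \<or> c k = 1"
  shows "0 \<le> ternary_value c" "ternary_value c \<le> 1/2"
proof -
  have geometric: "(\<lambda>k. 1/3 * (1/3::real) ^ k) sums (1/2)"
    using sums_mult[OF geometric_sums[of "1/3::real"], of "1/3"] by simp
  have nonneg: "0 \<le> real_of_int (c k) / 3 ^ Suc k" for k
    using assms[of k] by auto
  have upper: "real_of_int (c k) / 3 ^ Suc k \<le> 1/3 * (1/3) ^ k" for k
    using assms[of k] by (auto simp: power_one_over)
  have summable: "summable (\<lambda>k. real_of_int (c k) / 3 ^ Suc k)" by (rule summable_ternary) (rule assms)
  then show "0 \<le> ternary_value c" unfolding ternary_value_def using nonneg by (rule suminf_nonneg)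
  have "ternary_value c \<le> (\<Sum>k. 1/3 * (1/3::real) ^ k)"
    unfolding ternary_value_def using upper summable geometric by (intro suminf_le) (auto simp: sums_iff)
  then show "ternary_value c \<le> 1/2" using sums_unique[OF geometric] by simp
qed

lemma ternary_value_shift:
  assumes "\<And>k. c k = 0 \<or> c k = 1"
  shows "3 ^ m * ternary_value c = ternary_prefix c m + ternary_value (\<lambda>k. c (k + m))"
proof -
  have summable: "summable (\<lambda>k. real_of_int (c k) / 3 ^ Suc k)" by (rule summable_ternary) (rule assms)
  have prefix: "3 ^ m * (\<Sum>k<m. real_of_int (c k) / 3 ^ Suc k) = ternary_prefix c m"
    by (induction m) (simp_all add: field_simps)
  have "3 ^ m * (\<Sum>k. real_of_int (c (k + m)) / 3 ^ Suc (k + m)) =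
      (\<Sum>k. real_of_int (c (k + m)) / 3 ^ Suc k)"
    using summable_ignore_initial_segment[OF summable, of m]
    by (subst suminf_mult[symmetric]) (auto simp: power_add)
  then show ?thesis
    unfolding ternary_value_def suminf_split_initial_segment[OF summable, of m] prefix[symmetric]
    by (simp add: distrib_left)
qed

lemma ternary_digit_ternary_value:
  assumes "\<And>k. c k = 0 \<or> c k = 1"
  shows "ternary_digit m (ternary_value c) = c m"
proof -
  have floor: "\<lfloor>3 ^ m * ternary_value c\<rfloor> = ternary_prefix c m" for m
    using ternary_value_shift[OF assms, of m] ternary_value_bounds[of "\<lambda>k. c (k + m)"] assms
    by (simp add: floor_eq_iff)
  show ?thesis unfolding ternary_digit_def floor by simp
qed

definition interleave_digits :: "nat \<Rightarrow> (nat \<Rightarrow> real) \<Rightarrow> real" where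
  "interleave_digits n u = ternary_value (\<lambda>m. binary_digit (m div n) (u (m mod n)))"

definition deinterleave_digits :: "nat \<Rightarrow> nat \<Rightarrow> real \<Rightarrow> real" where
  "deinterleave_digits n j z = (\<Sum>k. real_of_int (ternary_digit (k * n + j) z) / 2 ^ Suc k)"

lemma deinterleave_interleave_digits:
  assumes "j < n" "0 \<le> u j" "u j < 1"
  shows "deinterleave_digits n j (interleave_digits n u) = u j"
proof -
  have "ternary_digit (k * n + j) (interleave_digits n u) = binary_digit k (u j)" for k
    unfolding interleave_digits_def using assms(1)
    by (subst ternary_digit_ternary_value) (simp_all add: binary_digit_01)
  then show ?thesis
    using binary_digit_sums[OF assms(2,3)] by (simp add: deinterleave_digits_def sums_iff)
qed

lemma borel_measurable_deinterleave_digits [measurable]: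
  "deinterleave_digits n j \<in> borel_measurable borel"
  unfolding deinterleave_digits_def ternary_digit_def by measurable

lemma borel_measurable_interleave_digits [measurable]:
  assumes [measurable]: "\<And>j. U j \<in> borel_measurable M"
  shows "(\<lambda>\<omega>. interleave_digits n (\<lambda>j. U j \<omega>)) \<in> borel_measurable M"
  unfolding interleave_digits_def ternary_value_def binary_digit_def by measurable

text \<open>Finitely many random variables are Borel functions of a single one, obtained by interleaving
  the binary digits of their images in the unit interval as ternary digits (which makes the
  decoding unambiguous).\<close>
lemma (in prob_space) exists_generating_variable:
  fixes n :: nat and X :: "nat \<Rightarrow> 'a \<Rightarrow> real"
  assumes "0 < n" and X: "\<And>j. j < n \<Longrightarrow> X j \<in> borel_measurable M"
    and cont: "\<And>x. isCont (rv_cdf M (X 0)) x"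
  obtains Z g where "Z \<in> borel_measurable M" "\<And>x. isCont (rv_cdf M Z) x"
    "\<And>j. g j \<in> borel_measurable borel" "\<And>j \<omega>. j < n \<Longrightarrow> \<omega> \<in> space M \<Longrightarrow> g j (Z \<omega>) = X j \<omega>"
proof
  define U where "U j \<omega> = (if j < n then arctan (X j \<omega>) / pi + 1/2 else 0)" for j \<omega>
  have [measurable]: "U j \<in> borel_measurable M" for j
  proof (cases "j < n")
    case True
    then have [measurable]: "X j \<in> borel_measurable M" by (rule X)
    have "U j = (\<lambda>\<omega>. arctan (X j \<omega>) / pi + 1/2)" using True by (simp add: U_def fun_eq_iff)
    then show ?thesis by simp
  next
    case False
    then have "U j = (\<lambda>\<omega>. 0)" by (simp add: U_def fun_eq_iff)
    then show ?thesis by simp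
  qed
  have U: "0 < U j \<omega>" "U j \<omega> < 1" if "j < n" for j \<omega>
    using arctan_bounded[of "X j \<omega>"] that by (simp_all add: U_def field_simps)
  define Z where "Z \<omega> = interleave_digits n (\<lambda>j. U j \<omega>)" for \<omega>
  define g where "g j z = tan (pi * (deinterleave_digits n j z - 1/2))" for j z
  show Z[measurable]: "Z \<in> borel_measurable M" unfolding Z_def by measurable
  show "g j \<in> borel_measurable borel" for j unfolding g_def tan_def by measurable
  show decode: "g j (Z \<omega>) = X j \<omega>" if "j < n" "\<omega> \<in> space M" for j \<omega>
    using deinterleave_interleave_digits[of j n "\<lambda>j. U j \<omega>"] U[OF \<open>j < n\<close>] that
    by (simp add: g_def Z_def U_def tan_arctan less_imp_le)
  show "isCont (rv_cdf M Z) x" for x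
  proof -
    have "{\<omega>\<in>space M. Z \<omega> = x} \<subseteq> {\<omega>\<in>space M. X 0 \<omega> = g 0 x}"
      using decode[OF \<open>0 < n\<close>] by auto
    then have "prob {\<omega>\<in>space M. Z \<omega> = x} \<le> prob {\<omega>\<in>space M. X 0 \<omega> = g 0 x}"
      using X[OF \<open>0 < n\<close>] by (intro finite_measure_mono) measurable
    also have "\<dots> = 0" using cont isCont_rv_cdf_iff[OF X[OF \<open>0 < n\<close>]] by blast
    finally show ?thesis using isCont_rv_cdf_iff[OF Z] measure_nonneg by (metis order_antisym)
  qed
qed

section \<open>Mixing with a doubly stochastic matrix\<close>

lemma doubly_stochastic_Birkhoff:
  assumes "doubly_stochastic n \<Lambda>" "0 < n"
  obtains m :: nat and w p where "\<And>k. k < m \<Longrightarrow> 0 \<le> w k"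
    "\<And>k. k < m \<Longrightarrow> bij_betw (p k) {..<n} {..<n}" "sum w {..<m} = 1"
    "\<And>i j. i < n \<Longrightarrow> j < n \<Longrightarrow> \<Lambda> i j = (\<Sum>k<m. w k * of_bool (p k i = j))"
proof -
  obtain m :: nat and w p where wp: "\<forall>k<m. 0 \<le> w k \<and> bij_betw (p k) {..<n} {..<n}"
    "\<forall>i<n. \<forall>j<n. \<Lambda> i j = (\<Sum>k<m. w k * of_bool (p k i = j))"
    using Birkhoff_decomposition[of n \<Lambda> 1] assms(1) unfolding doubly_stochastic_def by blast
  have "1 = (\<Sum>j<n. \<Lambda> 0 j)" using assms unfolding doubly_stochastic_def by simp
  also have "\<dots> = (\<Sum>j<n. \<Sum>k<m. w k * of_bool (p k 0 = j))"
    by (rule sum.cong[OF refl]) (simp add: wp(2)[rule_format] \<open>0 < n\<close>)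
  also have "\<dots> = (\<Sum>k<m. w k * (\<Sum>j<n. of_bool (p k 0 = j)))"
    by (subst sum.swap) (simp only: sum_distrib_left)
  also have "\<dots> = sum w {..<m}"
  proof (rule sum.cong[OF refl])
    fix k assume "k \<in> {..<m}"
    then have "p k 0 < n" using wp(1) \<open>0 < n\<close> by (auto dest: bij_betwE)
    then show "w k * (\<Sum>j<n. of_bool (p k 0 = j)) = w k" by (simp add: permutation_matrix_row_sum)
  qed
  finally show ?thesis using that wp by auto
qed

lemma mat_cdfs_Birkhoff:
  assumes "\<And>j. j < n \<Longrightarrow> \<Lambda> i j = (\<Sum>k<m. w k * of_bool (p k i = j))"
    and "\<And>k. k < m \<Longrightarrow> p k i < n"
  shows "mat_cdfs n \<Lambda> F i x = (\<Sum>k<m. w k * F (p k i) x)"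
proof -
  have "mat_cdfs n \<Lambda> F i x = (\<Sum>j<n. \<Sum>k<m. w k * of_bool (p k i = j) * F j x)"
    unfolding mat_cdfs_def by (rule sum.cong[OF refl]) (simp add: assms(1) sum_distrib_right)
  also have "\<dots> = (\<Sum>k<m. \<Sum>j<n. w k * of_bool (p k i = j) * F j x)" by (rule sum.swap)
  also have "\<dots> = (\<Sum>k<m. w k * F (p k i) x)"
  proof (rule sum.cong[OF refl])
    fix k assume "k \<in> {..<m}"
    have "(\<Sum>j<n. w k * of_bool (p k i = j) * F j x) = (\<Sum>j<n. if p k i = j then w k * F j x else 0)"
      by (rule sum.cong) simp_all
    also have "\<dots> = w k * F (p k i) x" using assms(2) \<open>k \<in> {..<m}\<close> by (simp add: sum.delta')
    finally show "(\<Sum>j<n. w k * of_bool (p k i = j) * F j x) = w k * F (p k i) x" .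
  qed
  finally show ?thesis .
qed

lemma mixture_transform_cong:
  "(\<And>k. k < m \<Longrightarrow> \<psi> k = \<psi>' k) \<Longrightarrow> mixture_transform m w \<psi> F v = mixture_transform m w \<psi>' F v"
  unfolding mixture_transform_def by (intro sum.cong) auto

lemma borel_measurable_mixture_transform [measurable]:
  assumes "is_cdf F" "\<And>k. \<psi> k \<in> borel_measurable borel"
  shows "mixture_transform m w \<psi> F \<in> borel_measurable borel"
  using assms unfolding mixture_transform_def slab_def by measurable

lemma (in prob_space) exists_permutation_mixture:
  fixes n :: nat and X :: "nat \<Rightarrow> 'a \<Rightarrow> real"
  assumes "0 < n" and X: "\<And>i. i < n \<Longrightarrow> X i \<in> borel_measurable M"
    and cont0: "\<And>x. isCont (rv_cdf M (X 0)) x" and ds: "doubly_stochastic n \<Lambda>"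
  obtains Y where "\<And>i. Y i \<in> borel_measurable M"
    "\<And>i. i < n \<Longrightarrow> rv_cdf M (Y i) = mat_cdfs n \<Lambda> (\<lambda>j. rv_cdf M (X j)) i"
    "rv_cdf M (\<lambda>\<omega>. \<Sum>i<n. Y i \<omega>) = rv_cdf M (\<lambda>\<omega>. \<Sum>i<n. X i \<omega>)"
proof -
  obtain Z g where Z[measurable]: "Z \<in> borel_measurable M" and Z_cont: "\<And>x. isCont (rv_cdf M Z) x"
    and g[measurable]: "\<And>j. g j \<in> borel_measurable borel"
    and gZ: "\<And>j \<omega>. j < n \<Longrightarrow> \<omega> \<in> space M \<Longrightarrow> g j (Z \<omega>) = X j \<omega>"
    using exists_generating_variable[of n X, OF \<open>0 < n\<close> X cont0] by blast
  define V where "V \<omega> = rv_cdf M Z (Z \<omega>)" for \<omega>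
  have V: "standard_uniform M V" unfolding V_def using Z Z_cont by (rule standard_uniform_cdf_transform)
  then have [measurable]: "V \<in> borel_measurable M" by (simp add: standard_uniform_def)
  obtain m :: nat and w p where w_nonneg: "\<And>k. k < m \<Longrightarrow> 0 \<le> w k"
    and p: "\<And>k. k < m \<Longrightarrow> bij_betw (p k) {..<n} {..<n}" and w_sum: "sum w {..<m} = 1"
    and \<Lambda>: "\<And>i j. i < n \<Longrightarrow> j < n \<Longrightarrow> \<Lambda> i j = (\<Sum>k<m. w k * of_bool (p k i = j))"
    using doubly_stochastic_Birkhoff[OF ds \<open>0 < n\<close>] by blast
  note w = w_nonneg w_sum
  have p_lt: "p k i < n" if "k < m" "i < n" for k i using bij_betwE[OF p[OF that(1)]] that(2) by blast
  define Y where "Y i \<omega> = mixture_transform m w (\<lambda>k. g (p k i)) (rv_cdf M Z) (V \<omega>)" for i \<omega>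
  have "is_cdf (rv_cdf M Z)" using Z by (rule is_cdf_rv_cdf)
  then have Y_meas: "Y i \<in> borel_measurable M" for i unfolding Y_def by measurable
  have Y_cdf: "rv_cdf M (Y i) = mat_cdfs n \<Lambda> (\<lambda>j. rv_cdf M (X j)) i" if "i < n" for i
  proof
    fix x
    have "rv_cdf M (\<lambda>\<omega>. g (p k i) (Z \<omega>)) = rv_cdf M (X (p k i))" if "k < m" for k
      using gZ p_lt[OF that \<open>i < n\<close>] by (intro rv_cdf_cong) simp
    then have "rv_cdf M (Y i) x = (\<Sum>k<m. w k * rv_cdf M (X (p k i)) x)"
      unfolding Y_def using rv_cdf_mixture_transform[OF V Z w] by simp
    also have "\<dots> = mat_cdfs n \<Lambda> (\<lambda>j. rv_cdf M (X j)) i x"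
      by (rule mat_cdfs_Birkhoff[symmetric]) (use \<Lambda> that p_lt in auto)
    finally show "rv_cdf M (Y i) x = mat_cdfs n \<Lambda> (\<lambda>j. rv_cdf M (X j)) i x" .
  qed
  have Y_sum: "rv_cdf M (\<lambda>\<omega>. \<Sum>i<n. Y i \<omega>) = rv_cdf M (\<lambda>\<omega>. \<Sum>i<n. X i \<omega>)"
  proof
    fix x
    have "(\<Sum>i<n. Y i \<omega>) = mixture_transform m w (\<lambda>k y. \<Sum>j<n. g j y) (rv_cdf M Z) (V \<omega>)" for \<omega>
      unfolding Y_def sum_mixture_transform
      using sum.reindex_bij_betw[OF p, of _ "\<lambda>j. g j _"] by (intro mixture_transform_cong) auto
    then have "rv_cdf M (\<lambda>\<omega>. \<Sum>i<n. Y i \<omega>) x = (\<Sum>k<m. w k * rv_cdf M (\<lambda>\<omega>. \<Sum>j<n. g j (Z \<omega>)) x)"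
      using rv_cdf_mixture_transform[OF V Z w] by simp
    also have "rv_cdf M (\<lambda>\<omega>. \<Sum>j<n. g j (Z \<omega>)) = rv_cdf M (\<lambda>\<omega>. \<Sum>i<n. X i \<omega>)"
      using gZ by (intro rv_cdf_cong) simp
    finally show "rv_cdf M (\<lambda>\<omega>. \<Sum>i<n. Y i \<omega>) x = rv_cdf M (\<lambda>\<omega>. \<Sum>i<n. X i \<omega>) x"
      using w(2) by (simp flip: sum_distrib_right)
  qed
  show ?thesis using that[OF Y_meas Y_cdf Y_sum] by blast
qed

theorem (in prob_space) agg_set_subset_mat_cdfs:
  assumes cont: "\<And>j x. j < n \<Longrightarrow> isCont (F j) x" and ds: "doubly_stochastic n \<Lambda>"
  shows "agg_set M n F \<subseteq> agg_set M n (mat_cdfs n \<Lambda> F)"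
proof
  fix H assume "H \<in> agg_set M n F"
  then obtain X where H: "H = rv_cdf M (\<lambda>\<omega>. \<Sum>i<n. X i \<omega>)"
    and X: "\<And>i. i < n \<Longrightarrow> X i \<in> borel_measurable M" "\<And>i. i < n \<Longrightarrow> rv_cdf M (X i) = F i"
    unfolding agg_set_def by blast
  show "H \<in> agg_set M n (mat_cdfs n \<Lambda> F)"
  proof (cases "n = 0")
    case False
    then have "0 < n" by simp
    moreover have "isCont (rv_cdf M (X 0)) x" for x using cont X(2) \<open>0 < n\<close> by simp
    ultimately obtain Y where "\<And>i. Y i \<in> borel_measurable M"
      "\<And>i. i < n \<Longrightarrow> rv_cdf M (Y i) = mat_cdfs n \<Lambda> (\<lambda>j. rv_cdf M (X j)) i"
      "rv_cdf M (\<lambda>\<omega>. \<Sum>i<n. Y i \<omega>) = H"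
      using exists_permutation_mixture[of n X, OF _ X(1) _ ds] H by metis
    moreover have "mat_cdfs n \<Lambda> (\<lambda>j. rv_cdf M (X j)) i = mat_cdfs n \<Lambda> F i" for i
      using X(2) by (simp add: mat_cdfs_def)
    ultimately show ?thesis unfolding agg_set_def by auto
  next
    case True
    then show ?thesis unfolding agg_set_def H by auto
  qed
qed

section \<open>Pareto distributions\<close>

definition pareto_quantile :: "real \<Rightarrow> real \<Rightarrow> real \<Rightarrow> real" where
  "pareto_quantile \<alpha> \<theta> t = \<theta> * (1 - t) powr (-1/\<alpha>)"

lemma borel_measurable_pareto_quantile [measurable]: "pareto_quantile \<alpha> \<theta> \<in> borel_measurable borel"
  unfolding pareto_quantile_def by measurable

context
  fixes \<alpha> \<theta> :: real
  assumes \<alpha>: "0 < \<alpha>" and \<theta>: "0 < \<theta>"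
begin

lemma pareto_cdf_eq_max: "pareto_cdf \<alpha> \<theta> x = 1 - (\<theta> / max x \<theta>) powr \<alpha>"
  using \<theta> by (auto simp: pareto_cdf_def max_def)

lemma isCont_pareto_cdf: "isCont (pareto_cdf \<alpha> \<theta>) x"
proof -
  have "isCont (\<lambda>x. 1 - (\<theta> / max x \<theta>) powr \<alpha>) x" using \<theta> by (intro continuous_intros) auto
  moreover have "pareto_cdf \<alpha> \<theta> = (\<lambda>x. 1 - (\<theta> / max x \<theta>) powr \<alpha>)"
    by (rule ext) (rule pareto_cdf_eq_max)
  ultimately show ?thesis by simp
qed

lemma pareto_cdf_nonneg: "0 \<le> pareto_cdf \<alpha> \<theta> x"
proof -
  have "(\<theta> / max x \<theta>) powr \<alpha> \<le> 1" using \<alpha> \<theta> by (intro powr_le1) (auto simp: field_simps)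
  then show ?thesis by (simp add: pareto_cdf_eq_max)
qed

lemma pareto_cdf_less_1: "pareto_cdf \<alpha> \<theta> x < 1"
  using \<theta> by (simp add: pareto_cdf_eq_max)

lemma pareto_cdf_eq_0: "x \<le> \<theta> \<Longrightarrow> pareto_cdf \<alpha> \<theta> x = 0"
  using \<theta> by (simp add: pareto_cdf_eq_max max_def)

lemma pareto_cdf_strict_mono: "\<theta> \<le> x \<Longrightarrow> x < y \<Longrightarrow> pareto_cdf \<alpha> \<theta> x < pareto_cdf \<alpha> \<theta> y"
proof -
  assume xy: "\<theta> \<le> x" "x < y"
  then have "\<theta> / y < \<theta> / x" using \<theta> by (simp add: divide_strict_left_mono)
  then have "(\<theta> / y) powr \<alpha> < (\<theta> / x) powr \<alpha>" using \<alpha> \<theta> xy by (intro powr_less_mono2) auto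
  then show ?thesis using xy by (simp add: pareto_cdf_def)
qed

lemma pareto_quantile_ge: "0 \<le> t \<Longrightarrow> t < 1 \<Longrightarrow> \<theta> \<le> pareto_quantile \<alpha> \<theta> t"
proof -
  assume t: "0 \<le> t" "t < 1"
  have "(1 - t) powr (1/\<alpha>) \<le> 1" using t \<alpha> by (intro powr_le1) auto
  moreover have "0 < (1 - t) powr (1/\<alpha>)" using t by simp
  ultimately have "1 \<le> (1 - t) powr (-1/\<alpha>)" using t by (simp add: powr_minus_divide)
  then show ?thesis unfolding pareto_quantile_def using \<theta> by simp
qed

lemma pareto_cdf_pareto_quantile:
  "0 \<le> t \<Longrightarrow> t < 1 \<Longrightarrow> pareto_cdf \<alpha> \<theta> (pareto_quantile \<alpha> \<theta> t) = t"
proof -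
  assume t: "0 \<le> t" "t < 1"
  have "\<theta> / pareto_quantile \<alpha> \<theta> t = (1 - t) powr (1/\<alpha>)"
    using t \<theta> by (simp add: pareto_quantile_def powr_minus_divide)
  then have "(\<theta> / pareto_quantile \<alpha> \<theta> t) powr \<alpha> = 1 - t" using t \<alpha> by (simp add: powr_powr)
  then show ?thesis using pareto_quantile_ge[OF t] by (simp add: pareto_cdf_def)
qed

lemma pareto_quantile_le_iff:
  assumes "0 \<le> t" "t < 1" "\<theta> \<le> x"
  shows "pareto_quantile \<alpha> \<theta> t \<le> x \<longleftrightarrow> t \<le> pareto_cdf \<alpha> \<theta> x"
proof
  let ?q = "pareto_quantile \<alpha> \<theta> t"
  have q: "pareto_cdf \<alpha> \<theta> ?q = t" "\<theta> \<le> ?q"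
    using pareto_cdf_pareto_quantile pareto_quantile_ge assms by auto
  show "t \<le> pareto_cdf \<alpha> \<theta> x" if "?q \<le> x"
    using pareto_cdf_strict_mono[OF q(2), of x] q(1) that by (cases "?q = x") auto
  show "?q \<le> x" if "t \<le> pareto_cdf \<alpha> \<theta> x"
    using pareto_cdf_strict_mono[OF assms(3), of ?q] q(1) that by fastforce
qed

lemma le_pareto_quantile_iff:
  assumes "0 \<le> t" "t < 1" "\<theta> \<le> x"
  shows "x \<le> pareto_quantile \<alpha> \<theta> t \<longleftrightarrow> pareto_cdf \<alpha> \<theta> x \<le> t"
proof
  let ?q = "pareto_quantile \<alpha> \<theta> t"
  have q: "pareto_cdf \<alpha> \<theta> ?q = t" "\<theta> \<le> ?q"
    using pareto_cdf_pareto_quantile pareto_quantile_ge assms by auto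
  show "pareto_cdf \<alpha> \<theta> x \<le> t" if "x \<le> ?q"
    using pareto_cdf_strict_mono[OF assms(3), of ?q] q(1) that by (cases "x = ?q") auto
  show "x \<le> ?q" if "pareto_cdf \<alpha> \<theta> x \<le> t"
    using pareto_cdf_strict_mono[OF q(2), of x] q(1) that by fastforce
qed

end

section \<open>Averaging the scales dominates the mixture\<close>

text \<open>Jensen for the concave \<open>x \<mapsto> x powr \<alpha>\<close>, via convexity of its inverse \<open>x \<mapsto> x powr (1/\<alpha>)\<close>.\<close>
lemma sum_weighted_powr_le:
  fixes w a :: "nat \<Rightarrow> real"
  assumes "0 < \<alpha>" "\<alpha> \<le> 1" and S: "finite S" "S \<noteq> {}"
    and w: "\<And>i. i \<in> S \<Longrightarrow> 0 \<le> w i" "(\<Sum>i\<in>S. w i) = 1" and a: "\<And>i. i \<in> S \<Longrightarrow> 0 < a i"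
  shows "(\<Sum>i\<in>S. w i * a i powr \<alpha>) \<le> (\<Sum>i\<in>S. w i * a i) powr \<alpha>"
proof -
  define s where "s = (\<Sum>i\<in>S. w i * a i powr \<alpha>)"
  have "0 \<le> s" unfolding s_def using w a by (intro sum_nonneg) auto
  have "convex_on {0<..} (\<lambda>x::real. x powr (1/\<alpha>))" using assms by (intro powr_convex) auto
  moreover have "a i \<noteq> 0" if "i \<in> S" for i using a[OF that] by simp
  ultimately have "s powr (1/\<alpha>) \<le> (\<Sum>i\<in>S. w i * (a i powr \<alpha>) powr (1/\<alpha>))"
    using convex_on_sum[OF S _ w(2) w(1), of "{0<..}" "\<lambda>x. x powr (1/\<alpha>)" "\<lambda>i. a i powr \<alpha>"]
    by (simp add: s_def)
  also have "\<dots> = (\<Sum>i\<in>S. w i * a i)"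
    using a \<open>0 < \<alpha>\<close> by (intro sum.cong) (auto simp: powr_powr less_imp_le)
  finally have "(s powr (1/\<alpha>)) powr \<alpha> \<le> (\<Sum>i\<in>S. w i * a i) powr \<alpha>"
    using \<open>0 < \<alpha>\<close> by (intro powr_mono2) auto
  then show ?thesis using \<open>0 \<le> s\<close> \<open>0 < \<alpha>\<close> by (simp add: powr_powr s_def)
qed

lemma convex_combination_pos:
  fixes n :: nat and w f :: "nat \<Rightarrow> real"
  assumes w: "\<And>j. j < n \<Longrightarrow> 0 \<le> w j" "(\<Sum>j<n. w j) = 1" and f: "\<And>j. j < n \<Longrightarrow> 0 < f j"
  shows "0 < (\<Sum>j<n. w j * f j)"
proof -
  obtain j0 where "j0 < n" "w j0 \<noteq> 0"
    using w(2) by (metis lessThan_iff one_neq_zero sum.not_neutral_contains_not_neutral)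
  then have "0 < w j0" using w(1)[OF \<open>j0 < n\<close>] by linarith
  then show ?thesis using w(1) f \<open>j0 < n\<close>
    by (intro sum_pos2[of _ j0]) (auto intro: mult_nonneg_nonneg less_imp_le)
qed

lemma pareto_cdf_le_mixture:
  fixes n :: nat
  assumes \<alpha>: "0 < \<alpha>" "\<alpha> \<le> 1" and w: "\<And>j. j < n \<Longrightarrow> 0 \<le> w j" "(\<Sum>j<n. w j) = 1"
    and \<theta>: "\<And>j. j < n \<Longrightarrow> 0 < \<theta> j" and y: "(\<Sum>j<n. w j * \<theta> j) \<le> y"
  shows "pareto_cdf \<alpha> (\<Sum>j<n. w j * \<theta> j) y \<le> (\<Sum>j<n. w j * pareto_cdf \<alpha> (\<theta> j) y)"
proof -
  define t where "t = (\<Sum>j<n. w j * \<theta> j)"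
  have "0 < t" unfolding t_def using w \<theta> by (rule convex_combination_pos)
  then have "0 < y" using y by (simp add: t_def)
  have "1 - (\<Sum>j<n. w j * pareto_cdf \<alpha> (\<theta> j) y) = (\<Sum>j<n. w j * (1 - pareto_cdf \<alpha> (\<theta> j) y))"
    using w(2) by (simp add: algebra_simps sum_subtractf)
  also have "\<dots> \<le> (\<Sum>j<n. w j * (\<theta> j / y) powr \<alpha>)"
  proof (rule sum_mono)
    fix j assume "j \<in> {..<n}"
    then have "\<theta> j / max y (\<theta> j) \<le> \<theta> j / y"
      using \<theta> \<open>0 < y\<close> by (intro divide_left_mono) (auto intro: less_imp_le)
    then have "(\<theta> j / max y (\<theta> j)) powr \<alpha> \<le> (\<theta> j / y) powr \<alpha>"
      using \<theta>[of j] \<alpha> \<open>j \<in> {..<n}\<close> by (intro powr_mono2) (auto simp: max_def)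
    then have "1 - pareto_cdf \<alpha> (\<theta> j) y \<le> (\<theta> j / y) powr \<alpha>"
      using \<theta> \<alpha> \<open>j \<in> {..<n}\<close> by (simp add: pareto_cdf_eq_max)
    then show "w j * (1 - pareto_cdf \<alpha> (\<theta> j) y) \<le> w j * (\<theta> j / y) powr \<alpha>"
      using w(1) \<open>j \<in> {..<n}\<close> by (simp add: mult_left_mono)
  qed
  also have "\<dots> \<le> (\<Sum>j<n. w j * (\<theta> j / y)) powr \<alpha>"
    using \<alpha> w \<theta> \<open>0 < y\<close> by (intro sum_weighted_powr_le) auto
  also have "(\<Sum>j<n. w j * (\<theta> j / y)) = t / y" by (simp add: t_def sum_divide_distrib)
  finally show ?thesis using y by (simp add: pareto_cdf_def t_def)
qed

text \<open>\<open>W\<close> is the Pareto quantile of the uniform variable \<open>F\<^sub>Y Y\<close>; dominance gives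
  \<open>pareto_cdf \<alpha> t Y \<le> F\<^sub>Y Y\<close>, hence \<open>Y \<le> W\<close>.\<close>
lemma (in prob_space) exists_pareto_above:
  assumes Y[measurable]: "Y \<in> borel_measurable M" and cont: "\<And>x. isCont (rv_cdf M Y) x"
    and less_1: "\<And>x. rv_cdf M Y x < 1" and "0 < \<alpha>" "0 < t"
    and dom: "\<And>y. t \<le> y \<Longrightarrow> pareto_cdf \<alpha> t y \<le> rv_cdf M Y y"
  obtains W where "W \<in> borel_measurable M" "rv_cdf M W = pareto_cdf \<alpha> t" "\<And>\<omega>. Y \<omega> \<le> W \<omega>"
proof
  define G where "G = rv_cdf M Y"
  define W where "W \<omega> = pareto_quantile \<alpha> t (G (Y \<omega>))" for \<omega>
  have "continuous_on UNIV G" using cont by (simp add: G_def continuous_at_imp_continuous_on)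
  then have [measurable]: "G \<in> borel_measurable borel" by (rule borel_measurable_continuous_onI)
  show "W \<in> borel_measurable M" unfolding W_def by measurable
  have G: "0 \<le> G y" "G y < 1" for y using less_1 by (simp_all add: G_def rv_cdf_nonneg)
  have W_ge: "t \<le> W \<omega>" for \<omega> unfolding W_def using pareto_quantile_ge[OF \<open>0 < \<alpha>\<close> \<open>0 < t\<close> G] .
  show "rv_cdf M W = pareto_cdf \<alpha> t"
  proof
    fix x
    show "rv_cdf M W x = pareto_cdf \<alpha> t x"
    proof (cases "t \<le> x")
      case True
      have "{\<omega>\<in>space M. W \<omega> \<le> x} = {\<omega>\<in>space M. G (Y \<omega>) \<le> pareto_cdf \<alpha> t x}"
        using pareto_quantile_le_iff[OF \<open>0 < \<alpha>\<close> \<open>0 < t\<close> G True] by (auto simp: W_def)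
      then show ?thesis
        using prob_cdf_transform_le[OF Y cont pareto_cdf_nonneg pareto_cdf_less_1] \<open>0 < \<alpha>\<close> \<open>0 < t\<close>
        by (simp add: rv_cdf_def[of M W] G_def)
    next
      case False
      then have empty: "{\<omega>\<in>space M. W \<omega> \<le> x} = {}"
        using W_ge by (auto simp: not_le intro: less_le_trans)
      have "rv_cdf M W x = 0" unfolding rv_cdf_def empty by simp
      then show ?thesis using False pareto_cdf_eq_0[OF \<open>0 < \<alpha>\<close> \<open>0 < t\<close>, of x] by simp
    qed
  qed
  show "Y \<omega> \<le> W \<omega>" for \<omega>
  proof (cases "t \<le> Y \<omega>")
    case True
    then show ?thesis
      using le_pareto_quantile_iff[OF \<open>0 < \<alpha>\<close> \<open>0 < t\<close> G True] dom[OF True] by (simp add: W_def G_def)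
  qed (use W_ge[of \<omega>] in simp)
qed

lemma worst_rho_mono_dominated:
  assumes "prob_space M" and \<rho>: "monotone_risk \<rho>"
    and dom: "\<And>i Y. i < n \<Longrightarrow> Y \<in> borel_measurable M \<Longrightarrow> rv_cdf M Y = F i \<Longrightarrow>
      \<exists>W. W \<in> borel_measurable M \<and> rv_cdf M W = G i \<and> (\<forall>\<omega>. Y \<omega> \<le> W \<omega>)"
  shows "worst_rho M \<rho> n F \<le> worst_rho M \<rho> n G"
  unfolding worst_rho_def[of M \<rho> n F]
proof (rule SUP_least)
  interpret prob_space M by fact
  fix H assume "H \<in> agg_set M n F"
  then obtain X where H: "H = rv_cdf M (\<lambda>\<omega>. \<Sum>i<n. X i \<omega>)"
    and X: "\<forall>i<n. X i \<in> borel_measurable M \<and> rv_cdf M (X i) = F i"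
    unfolding agg_set_def by blast
  then have "\<forall>i\<in>{..<n}. \<exists>W. W \<in> borel_measurable M \<and> rv_cdf M W = G i \<and> (\<forall>\<omega>. X i \<omega> \<le> W \<omega>)"
    using dom by blast
  then obtain W where W: "\<forall>i\<in>{..<n}. W i \<in> borel_measurable M \<and> rv_cdf M (W i) = G i \<and> (\<forall>\<omega>. X i \<omega> \<le> W i \<omega>)"
    by (metis bchoice)
  have X_sum: "(\<lambda>\<omega>. \<Sum>i<n. X i \<omega>) \<in> borel_measurable M" using X by (intro borel_measurable_sum) auto
  have W_sum: "(\<lambda>\<omega>. \<Sum>i<n. W i \<omega>) \<in> borel_measurable M" using W by (intro borel_measurable_sum) auto
  define H' where "H' = rv_cdf M (\<lambda>\<omega>. \<Sum>i<n. W i \<omega>)"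
  have "H' \<in> agg_set M n G" unfolding agg_set_def H'_def using W by auto
  moreover have "\<rho> H \<le> \<rho> H'"
  proof -
    have "(\<Sum>i<n. X i \<omega>) \<le> (\<Sum>i<n. W i \<omega>)" for \<omega> using W by (intro sum_mono) auto
    then have "{\<omega>\<in>space M. (\<Sum>i<n. W i \<omega>) \<le> x} \<subseteq> {\<omega>\<in>space M. (\<Sum>i<n. X i \<omega>) \<le> x}" for x
      by (auto intro: order_trans)
    moreover have "{\<omega>\<in>space M. (\<Sum>i<n. X i \<omega>) \<le> x} \<in> sets M" for x using X_sum by measurable
    ultimately have "H' x \<le> H x" for x
      unfolding H H'_def rv_cdf_def by (intro finite_measure_mono)
    moreover have "H \<in> cdf_set" "H' \<in> cdf_set"
      unfolding H H'_def cdf_set_def using X_sum W_sum by (auto intro: is_cdf_rv_cdf)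
    ultimately show ?thesis using \<rho> unfolding monotone_risk_def by blast
  qed
  ultimately show "ereal (\<rho> H) \<le> worst_rho M \<rho> n G"
    unfolding worst_rho_def by (auto intro: SUP_upper2)
qed

lemma worst_rho_mat_cdfs_le_pareto:
  assumes M: "prob_space M" and \<rho>: "monotone_risk \<rho>" and \<alpha>: "0 < \<alpha>" "\<alpha> \<le> 1"
    and \<theta>: "\<forall>i<n. 0 < \<theta> i" and ds: "doubly_stochastic n \<Lambda>"
  shows "worst_rho M \<rho> n (mat_cdfs n \<Lambda> (pareto_tuple \<alpha> \<theta>)) \<le> worst_rho M \<rho> n (pareto_tuple \<alpha> (mat_vec n \<Lambda> \<theta>))"
proof (rule worst_rho_mono_dominated[OF M \<rho>])
  interpret prob_space M by (rule M)
  fix i Y assume i: "i < n" and Y: "Y \<in> borel_measurable M"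
    and Y_cdf: "rv_cdf M Y = mat_cdfs n \<Lambda> (pareto_tuple \<alpha> \<theta>) i"
  have w: "\<And>j. j < n \<Longrightarrow> 0 \<le> \<Lambda> i j" "(\<Sum>j<n. \<Lambda> i j) = 1"
    using ds i by (auto simp: doubly_stochastic_def)
  define t where "t = (\<Sum>j<n. \<Lambda> i j * \<theta> j)"
  have "0 < t" unfolding t_def using w \<theta> by (intro convex_combination_pos) auto
  have G: "rv_cdf M Y x = (\<Sum>j<n. \<Lambda> i j * pareto_cdf \<alpha> (\<theta> j) x)" for x
    by (simp add: Y_cdf mat_cdfs_def pareto_tuple_def)
  have "isCont (rv_cdf M Y) x" for x
    unfolding G[abs_def] using \<alpha> \<theta> by (intro continuous_intros isCont_pareto_cdf) auto
  moreover have "rv_cdf M Y x < 1" for x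
  proof -
    have "0 < (\<Sum>j<n. \<Lambda> i j * (1 - pareto_cdf \<alpha> (\<theta> j) x))"
      using w \<theta> \<alpha> pareto_cdf_less_1 by (intro convex_combination_pos) auto
    then show ?thesis using w(2) by (simp add: G algebra_simps sum_subtractf)
  qed
  moreover have "pareto_cdf \<alpha> t y \<le> rv_cdf M Y y" if "t \<le> y" for y
    unfolding G t_def using \<alpha> w \<theta> that by (intro pareto_cdf_le_mixture) (auto simp: t_def)
  ultimately obtain W where "W \<in> borel_measurable M" "rv_cdf M W = pareto_cdf \<alpha> t" "\<And>\<omega>. Y \<omega> \<le> W \<omega>"
    using exists_pareto_above[OF Y _ _ \<alpha>(1) \<open>0 < t\<close>] by blast
  then show "\<exists>W. W \<in> borel_measurable M \<and> rv_cdf M W = pareto_tuple \<alpha> (mat_vec n \<Lambda> \<theta>) i \<and> (\<forall>\<omega>. Y \<omega> \<le> W \<omega>)"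
    by (auto simp: pareto_tuple_def mat_vec_def t_def)
qed

theorem theorem15:
  fixes M :: "'a measure" and \<rho> :: "(real \<Rightarrow> real) \<Rightarrow> real"
    and n :: nat and \<alpha> :: real and \<theta> :: "nat \<Rightarrow> real" and \<Lambda> :: "nat \<Rightarrow> nat \<Rightarrow> real"
  assumes "prob_space M" and "atomless M"
    and "monotone_risk \<rho>"
    and "0 < \<alpha>" and "\<alpha> \<le> 1"
    and "\<forall>i<n. 0 < \<theta> i"
    and "doubly_stochastic n \<Lambda>"
  shows "worst_rho M \<rho> n (pareto_tuple \<alpha> \<theta>) \<le> worst_rho M \<rho> n (mat_cdfs n \<Lambda> (pareto_tuple \<alpha> \<theta>))
    \<and> worst_rho M \<rho> n (mat_cdfs n \<Lambda> (pareto_tuple \<alpha> \<theta>)) \<le> worst_rho M \<rho> n (pareto_tuple \<alpha> (mat_vec n \<Lambda> \<theta>))"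
proof
  interpret prob_space M by fact
  have "agg_set M n (pareto_tuple \<alpha> \<theta>) \<subseteq> agg_set M n (mat_cdfs n \<Lambda> (pareto_tuple \<alpha> \<theta>))"
    using assms(4,6,7) by (intro agg_set_subset_mat_cdfs) (auto simp: pareto_tuple_def isCont_pareto_cdf)
  then show "worst_rho M \<rho> n (pareto_tuple \<alpha> \<theta>) \<le> worst_rho M \<rho> n (mat_cdfs n \<Lambda> (pareto_tuple \<alpha> \<theta>))"
    unfolding worst_rho_def by (rule SUP_subset_mono) simp
  show "worst_rho M \<rho> n (mat_cdfs n \<Lambda> (pareto_tuple \<alpha> \<theta>)) \<le> worst_rho M \<rho> n (pareto_tuple \<alpha> (mat_vec n \<Lambda> \<theta>))"
    using assms(1,3,4,5,6,7) by (rule worst_rho_mat_cdfs_le_pareto)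
qed

end
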